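(* Let $f(0),f(1)$ be probability mass functions on $\{0,\ldots,n\}$ and suppose there exists a geodesic $f$ between them (with coefficients $\boldsymbol\alpha$ and velocity field $v_{\alpha,k}$). Then $\beta(t)$ is constant for almost every $t$. Moreover, writing $\lambda(t)=\sum_kkf_k(t)$ for the mean, $$V_n(f(0),f(1))\ge|\lambda(0)-\lambda(1)|,$$ with equality if and only if $v_{\alpha,k}(t)\equiv v$ for all $k$ and $t$, for some constant $v$.
   Context: Fix $n\ge1$. For a sequence $(a_k)_{k\in\mathbb Z}$ write $\nabla_1a_k=a_k-a_{k-1}$; functions indexed by $k$ are extended by $0$ outside their index range. $\mathcal A$ is the set of measurable $\boldsymbol\alpha(t)=(\alpha_0(t),\ldots,\alpha_n(t))$, $t\in[0,1]$, with $\alpha_0\equiv0$, $\alpha_n\equiv1$, $0\le\alpha_k\le1$. For probability mass functions $f(0),f(1)$ on $\{0,\ldots,n\}$, $\mathcal P_{\mathbb Z}(f(0),f(1))$ is the set of continuous, piecewise differentiable families $(f_k(t))_{t\in[0,1]}$ of probability mass functions on $\{0,\ldots,n\}$ with $f_k(0)$, $f_k(1)$ the given ones. Given $\boldsymbol\alpha\in\mathcal A$ set $g_k(t)=\alpha_{k+1}(t)f_{k+1}(t)+(1-\alpha_k(t))f_k(t)$ for $k=0,\ldots,n-1$, and call $v_{\alpha,k}(t)$ a velocity field if $\frac{\partial f_k}{\partial t}(t)+\nabla_1\big(v_{\alpha,k}(t)g_k(t)\big)=0$ for $t$-almost every $t$ and $k=0,\ldots,n$. The path length is $\mathcal I(f)^2=\int_0^1\beta(t)\,dt$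 with $\beta(t)=\sum_{k=0}^{n-1}g_k(t)v_{\alpha,k}(t)^2$, and $V_n(f(0),f(1))^2=\inf\mathcal I(f)^2$, the infimum over all $f\in\mathcal P_{\mathbb Z}(f(0),f(1))$, $\boldsymbol\alpha\in\mathcal A$ and velocity fields. A path attaining the infimum is a geodesic. *)

theory Defs
  imports "HOL-Analysis.Analysis"
begin

definition pmf_on :: "nat \<Rightarrow> (nat \<Rightarrow> real) \<Rightarrow> bool" where
  "pmf_on n p \<longleftrightarrow> (\<forall>k. 0 \<le> p k) \<and> (\<forall>k>n. p k = 0) \<and> (\<Sum>k\<le>n. p k) = 1"

definition nabla1 :: "(nat \<Rightarrow> real) \<Rightarrow> nat \<Rightarrow> real" where
  "nabla1 a k = a k - (if k = 0 then 0 else a (k - 1))"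

definition paths :: "nat \<Rightarrow> (nat \<Rightarrow> real) \<Rightarrow> (nat \<Rightarrow> real) \<Rightarrow> (real \<Rightarrow> nat \<Rightarrow> real) set" where
  "paths n f0 f1 = {f. (\<forall>t\<in>{0..1}. pmf_on n (f t))
      \<and> (\<forall>k\<le>n. (\<lambda>t. f t k) piecewise_differentiable_on {0..1})
      \<and> f 0 = f0 \<and> f 1 = f1}"

definition coeffs :: "nat \<Rightarrow> (real \<Rightarrow> nat \<Rightarrow> real) set" where
  "coeffs n = {\<alpha>. (\<forall>k\<le>n. (\<lambda>t. \<alpha> t k) \<in> borel_measurable (lebesgue_on {0..1}))
      \<and> (\<forall>t\<in>{0..1}. \<alpha> t 0 = 0 \<and> \<alpha> t n = 1 \<and> (\<forall>k\<le>n. 0 \<le> \<alpha> t k \<and> \<alpha> t k \<le> 1))}"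

definition gcoef :: "(real \<Rightarrow> nat \<Rightarrow> real) \<Rightarrow> (real \<Rightarrow> nat \<Rightarrow> real) \<Rightarrow> real \<Rightarrow> nat \<Rightarrow> real" where
  "gcoef \<alpha> f t k = \<alpha> t (k + 1) * f t (k + 1) + (1 - \<alpha> t k) * f t k"

definition flux :: "nat \<Rightarrow> (real \<Rightarrow> nat \<Rightarrow> real) \<Rightarrow> (real \<Rightarrow> nat \<Rightarrow> real)
    \<Rightarrow> (real \<Rightarrow> nat \<Rightarrow> real) \<Rightarrow> real \<Rightarrow> nat \<Rightarrow> real" where
  "flux n \<alpha> f v t k = (if k < n then v t k * gcoef \<alpha> f t k else 0)"

definition velocity_field :: "nat \<Rightarrow> (real \<Rightarrow> nat \<Rightarrow> real) \<Rightarrow> (real \<Rightarrow> nat \<Rightarrow> real)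
    \<Rightarrow> (real \<Rightarrow> nat \<Rightarrow> real) \<Rightarrow> bool" where
  "velocity_field n f \<alpha> v \<longleftrightarrow>
     (\<forall>k<n. (\<lambda>t. v t k) \<in> borel_measurable (lebesgue_on {0..1})) \<and>
     (AE t in lebesgue_on {0..1}. \<forall>k\<le>n.
        ((\<lambda>s. f s k) has_real_derivative (- nabla1 (flux n \<alpha> f v t) k)) (at t within {0..1}))"

definition beta :: "nat \<Rightarrow> (real \<Rightarrow> nat \<Rightarrow> real) \<Rightarrow> (real \<Rightarrow> nat \<Rightarrow> real)
    \<Rightarrow> (real \<Rightarrow> nat \<Rightarrow> real) \<Rightarrow> real \<Rightarrow> real" where
  "beta n f \<alpha> v t = (\<Sum>k<n. gcoef \<alpha> f t k * (v t k)\<^sup>2)"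

definition path_length_sq :: "nat \<Rightarrow> (real \<Rightarrow> nat \<Rightarrow> real) \<Rightarrow> (real \<Rightarrow> nat \<Rightarrow> real)
    \<Rightarrow> (real \<Rightarrow> nat \<Rightarrow> real) \<Rightarrow> ennreal" where
  "path_length_sq n f \<alpha> v = (\<integral>\<^sup>+ t. ennreal (beta n f \<alpha> v t) \<partial>lebesgue_on {0..1})"

definition Vn_sq :: "nat \<Rightarrow> (nat \<Rightarrow> real) \<Rightarrow> (nat \<Rightarrow> real) \<Rightarrow> ennreal" where
  "Vn_sq n f0 f1 = Inf {path_length_sq n f \<alpha> v | f \<alpha> v.
      f \<in> paths n f0 f1 \<and> \<alpha> \<in> coeffs n \<and> velocity_field n f \<alpha> v}"

definition Vn :: "nat \<Rightarrow> (nat \<Rightarrow> real) \<Rightarrow> (nat \<Rightarrow> real) \<Rightarrow> ennreal" where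
  "Vn n f0 f1 = (if Vn_sq n f0 f1 = \<infinity> then \<infinity> else ennreal (sqrt (enn2real (Vn_sq n f0 f1))))"

definition is_geodesic :: "nat \<Rightarrow> (nat \<Rightarrow> real) \<Rightarrow> (nat \<Rightarrow> real) \<Rightarrow> (real \<Rightarrow> nat \<Rightarrow> real)
    \<Rightarrow> (real \<Rightarrow> nat \<Rightarrow> real) \<Rightarrow> (real \<Rightarrow> nat \<Rightarrow> real) \<Rightarrow> bool" where
  "is_geodesic n f0 f1 f \<alpha> v \<longleftrightarrow> f \<in> paths n f0 f1 \<and> \<alpha> \<in> coeffs n \<and> velocity_field n f \<alpha> v
     \<and> path_length_sq n f \<alpha> v = Vn_sq n f0 f1"

definition mean :: "nat \<Rightarrow> (nat \<Rightarrow> real) \<Rightarrow> real" where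
  "mean n p = (\<Sum>k\<le>n. real k * p k)"

end

theory Submission
  imports Defs
begin

text \<open>
  Write \<open>W(t) = \<Sum>\<^sub>k g\<^sub>k(t) v\<^sub>k(t)\<close> for the \<open>g\<close>-weighted average velocity. Summation by parts in the
  continuity equation gives \<open>\<lambda>'(t) = W(t)\<close>, so \<open>\<integral>\<^sub>0\<^sup>1 W = \<lambda>(1) - \<lambda>(0)\<close>. Since the weights
  \<open>g\<^sub>k(t)\<close> sum to one, \<open>W(t)\<^sup>2 \<le> \<beta>(t)\<close> pointwise, and \<open>(\<integral>W)\<^sup>2 \<le> \<integral>W\<^sup>2\<close>; this gives the lower bound,
  and equality forces both inequalities to be tight, i.e. \<open>v\<^sub>k(t)\<close> is one constant wherever
  \<open>g\<^sub>k(t) \<noteq> 0\<close>.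

  For the constancy of \<open>\<beta>\<close> along a geodesic, reparametrise it by the piecewise linear
  homeomorphism of \<open>[0,1]\<close> sending \<open>m\<close> to \<open>x\<close>. Its energy is
  \<open>(x/m) A + ((1-x)/(1-m)) B\<close>, where \<open>A\<close> and \<open>B\<close> are the energies of the geodesic on \<open>[0,x]\<close> and
  \<open>(x,1]\<close>. Minimality at \<open>m = x\<close> gives \<open>A = x (A + B)\<close>, so the energy on \<open>[0,x]\<close> is linear in
  \<open>x\<close> and \<open>\<beta>\<close> is a.e. constant. This needs the energy of the geodesic to be finite, which is
  shown by exhibiting one admissible path of finite energy.
\<close>

lemma sum_split_mass:
  fixes a p :: "nat \<Rightarrow> real"
  assumes "a 0 = 0" "a n = 1"
  shows "(\<Sum>k<n. a (k+1) * p (k+1) + (1 - a k) * p k) = (\<Sum>k\<le>n. p k)"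
proof -
  have shifted: "(\<Sum>k<n. a (k+1) * p (k+1)) = (\<Sum>k\<le>n. a k * p k)"
  proof -
    have "(\<Sum>k\<le>n. a k * p k) = (\<Sum>k<Suc n. a k * p k)" by (simp only: lessThan_Suc_atMost)
    also have "\<dots> = (\<Sum>k<n. a (k+1) * p (k+1))" by (subst sum.lessThan_Suc_shift) (simp add: assms(1))
    finally show ?thesis by (rule sym)
  qed
  have "(\<Sum>k<n. (1 - a k) * p k) = (\<Sum>k\<le>n. (1 - a k) * p k)"
    using assms(2) by (simp add: lessThan_Suc_atMost[symmetric] del: lessThan_Suc_atMost)
  then have "(\<Sum>k<n. a (k+1) * p (k+1) + (1 - a k) * p k) = (\<Sum>k\<le>n. a k * p k + (1 - a k) * p k)"
    by (simp only: sum.distrib shifted)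
  also have "\<dots> = (\<Sum>k\<le>n. p k)" by (simp add: algebra_simps)
  finally show ?thesis .
qed

lemma nabla1_cong: "(\<And>j. j \<le> k \<Longrightarrow> F j = G j) \<Longrightarrow> nabla1 F k = nabla1 G k"
  by (simp add: nabla1_def)

lemma sum_of_nat_mult_nabla1:
  fixes F :: "nat \<Rightarrow> real"
  shows "(\<Sum>k\<le>N. real k * nabla1 F k) = real N * F N - (\<Sum>k<N. F k)"
proof (induction N)
  case 0 then show ?case by (simp add: nabla1_def)
next
  case (Suc N)
  have "(\<Sum>k\<le>Suc N. real k * nabla1 F k) = (\<Sum>k\<le>N. real k * nabla1 F k) + real (Suc N) * (F (Suc N) - F N)"
    by (simp add: nabla1_def)
  also have "\<dots> = real (Suc N) * F (Suc N) - (\<Sum>k<Suc N. F k)"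
    using Suc by (simp add: algebra_simps)
  finally show ?case .
qed

lemma sum_weighted_sq_deviation:
  fixes g v :: "nat \<Rightarrow> real"
  assumes "(\<Sum>k<n. g k) = 1"
  shows "(\<Sum>k<n. g k * (v k - w)^2) = (\<Sum>k<n. g k * (v k)^2) - 2 * w * (\<Sum>k<n. g k * v k) + w^2"
proof -
  have "(\<Sum>k<n. g k * (v k - w)^2) = (\<Sum>k<n. g k * (v k)^2 - 2 * w * (g k * v k) + w^2 * g k)"
    by (intro sum.cong) (auto simp: power2_eq_square algebra_simps)
  also have "\<dots> = (\<Sum>k<n. g k * (v k)^2) - 2 * w * (\<Sum>k<n. g k * v k) + w^2 * (\<Sum>k<n. g k)"
    by (simp add: sum.distrib sum_subtractf sum_distrib_left)
  finally show ?thesis using assms by simp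
qed

lemma pmf_on_partial_sum_bounds:
  assumes "pmf_on n p"
  shows "0 \<le> (\<Sum>j\<le>k. p j)" and "k \<le> n \<Longrightarrow> (\<Sum>j\<le>k. p j) \<le> 1"
proof -
  show "0 \<le> (\<Sum>j\<le>k. p j)" using assms by (auto simp: pmf_on_def intro: sum_nonneg)
  assume "k \<le> n"
  then have "(\<Sum>j\<le>k. p j) \<le> (\<Sum>j\<le>n. p j)"
    using assms by (intro sum_mono2) (auto simp: pmf_on_def)
  then show "(\<Sum>j\<le>k. p j) \<le> 1" using assms by (simp add: pmf_on_def)
qed

lemma AE_lebesgue_on_negligibleE:
  assumes "AE x in lebesgue_on S. P x" "S \<in> sets lebesgue"
  obtains N where "negligible N" "\<And>x. x \<in> S \<Longrightarrow> x \<notin> N \<Longrightarrow> P x"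
proof -
  have "AE x in lebesgue. x \<in> S \<longrightarrow> P x"
    using assms by (subst (asm) AE_restrict_space_iff) auto
  then obtain N where "negligible N" "{x. \<not> (x \<in> S \<longrightarrow> P x)} \<subseteq> N"
    unfolding eventually_ae_filter_negligible by blast
  then show ?thesis using that by blast
qed

lemma integral_sq_deviation:
  fixes X :: "'a \<Rightarrow> real"
  assumes M: "emeasure M (space M) = 1"
    and X: "integrable M X" and X2: "integrable M (\<lambda>t. (X t)^2)"
  shows "integrable M (\<lambda>t. (X t - c)^2)"
    and "(\<integral>t. (X t - (\<integral>t. X t \<partial>M))^2 \<partial>M) = (\<integral>t. (X t)^2 \<partial>M) - (\<integral>t. X t \<partial>M)^2"
proof -
  interpret finite_measure M using M by (intro finite_measureI) simp
  have measure_1: "measure M (space M) = 1" using M by (simp add: measure_def)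
  have expand: "(\<lambda>t. (X t - c)^2) = (\<lambda>t. ((X t)^2 - 2 * c * X t) + c^2)" for c
    by (auto simp: power2_eq_square algebra_simps)
  show "integrable M (\<lambda>t. (X t - c)^2)"
    unfolding expand using X X2 by auto
  define c where "c = (\<integral>t. X t \<partial>M)"
  have "(\<integral>t. (X t - c)^2 \<partial>M) = (\<integral>t. ((X t)^2 - 2 * c * X t) \<partial>M) + (\<integral>t. c^2 \<partial>M)"
    unfolding expand using X X2 by (intro Bochner_Integration.integral_add) auto
  also have "\<dots> = (\<integral>t. (X t)^2 \<partial>M) - 2 * c * c + c^2"
    using X X2 measure_1 by (subst Bochner_Integration.integral_diff) (auto simp: c_def)
  finally show "(\<integral>t. (X t - (\<integral>t. X t \<partial>M))^2 \<partial>M) = (\<integral>t. (X t)^2 \<partial>M) - (\<integral>t. X t \<partial>M)^2"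
    by (simp add: c_def power2_eq_square)
qed

lemma density_lborel_AE_eq_if_atMost:
  fixes g h :: "real \<Rightarrow> ennreal"
  assumes [measurable]: "g \<in> borel_measurable borel" "h \<in> borel_measurable borel"
    and eq: "\<And>x. (\<integral>\<^sup>+t. g t * indicator {..x} t \<partial>lborel) = (\<integral>\<^sup>+t. h t * indicator {..x} t \<partial>lborel)"
    and fin: "\<And>x. (\<integral>\<^sup>+t. g t * indicator {..x} t \<partial>lborel) \<noteq> \<infinity>"
  shows "AE t in lborel. g t = h t"
proof (rule sigma_finite_measure.density_unique[OF sigma_finite_lborel])
  have sets_rays: "sets (density lborel k) = sigma_sets UNIV (range atMost)" for k :: "real \<Rightarrow> ennreal"
    by (simp only: sets_density sets_lborel) (subst borel_eq_atMost, simp add: sets_measure_of)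
  show "density lborel g = density lborel h"
  proof (rule measure_eqI_generator_eq[where \<Omega>=UNIV and E="range atMost" and A="\<lambda>i. {..real i}"])
    show "Int_stable (range atMost :: real set set)" by (auto simp: Int_stable_def)
    show "(\<Union>i. {..real i}) = (UNIV :: real set)" by (auto intro: real_arch_simple)
  qed (use eq fin sets_rays in \<open>auto simp: emeasure_density\<close>)
qed auto

lemma nn_integral_atMost_if_linear:
  fixes h :: "real \<Rightarrow> real" and T :: real
  assumes hz: "\<And>t. t \<notin> {0..1} \<Longrightarrow> h t = 0"
    and total: "(\<integral>\<^sup>+t. ennreal (h t) \<partial>lebesgue) = ennreal T"
    and linear: "\<And>x. 0 < x \<Longrightarrow> x < 1 \<Longrightarrow>
      (\<integral>\<^sup>+t. ennreal (h t) * indicator {0..x} t \<partial>lebesgue) = ennreal (x * T)"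
  shows "(\<integral>\<^sup>+t. ennreal (h t) * indicator {..x} t \<partial>lebesgue) = ennreal (T * max 0 (min 1 x))"
proof -
  consider "x < 0" | "x = 0" | "0 < x \<and> x < 1" | "1 \<le> x" by force
  then show ?thesis
  proof cases
    case 1
    have "(\<integral>\<^sup>+t. ennreal (h t) * indicator {..x} t \<partial>lebesgue) = (\<integral>\<^sup>+(t::real). 0 \<partial>lebesgue)"
      by (rule nn_integral_cong) (use 1 hz in \<open>force split: split_indicator\<close>)
    then show ?thesis using 1 by simp
  next
    case 2
    have "AE (t::real) in lebesgue. t \<notin> {0}"
      by (rule AE_not_in) (use negligible_iff_null_sets negligible_finite in blast)
    then have "(\<integral>\<^sup>+t. ennreal (h t) * indicator {..x} t \<partial>lebesgue) = (\<integral>\<^sup>+(t::real). 0 \<partial>lebesgue)"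
      by (intro nn_integral_cong_AE, eventually_elim) (use 2 hz in \<open>auto split: split_indicator\<close>)
    then show ?thesis using 2 by simp
  next
    case 3
    have "(\<integral>\<^sup>+t. ennreal (h t) * indicator {..x} t \<partial>lebesgue)
        = (\<integral>\<^sup>+t. ennreal (h t) * indicator {0..x} t \<partial>lebesgue)"
      by (rule nn_integral_cong) (use hz in \<open>force split: split_indicator\<close>)
    then show ?thesis using 3 linear[of x] by (simp add: mult.commute)
  next
    case 4
    have "(\<integral>\<^sup>+t. ennreal (h t) * indicator {..x} t \<partial>lebesgue) = (\<integral>\<^sup>+t. ennreal (h t) \<partial>lebesgue)"
      by (rule nn_integral_cong) (use hz 4 in \<open>force split: split_indicator\<close>)
    then show ?thesis using 4 total by simp
  qed
qed

lemma AE_eq_const_if_nn_integral_linear: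
  fixes h :: "real \<Rightarrow> real" and T :: real
  assumes hm: "h \<in> borel_measurable lebesgue"
    and hnn: "\<And>t. 0 \<le> h t" and hz: "\<And>t. t \<notin> {0..1} \<Longrightarrow> h t = 0"
    and total: "(\<integral>\<^sup>+t. ennreal (h t) \<partial>lebesgue) = ennreal T" and T: "0 \<le> T"
    and linear: "\<And>x. 0 < x \<Longrightarrow> x < 1 \<Longrightarrow>
      (\<integral>\<^sup>+t. ennreal (h t) * indicator {0..x} t \<partial>lebesgue) = ennreal (x * T)"
  shows "AE t in lebesgue. t \<in> {0..1} \<longrightarrow> h t = T"
proof -
  obtain g where gm: "g \<in> borel_measurable lborel" and hg: "AE t in lborel. h t = g t"
    using completion_ex_borel_measurable_real[of h lborel] hm by auto
  have hg_lebesgue: "AE t in lebesgue. h t = g t" using hg by (rule AE_completion)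
  have g_rays: "(\<integral>\<^sup>+t. ennreal (g t) * indicator {..x} t \<partial>lborel) = ennreal (T * max 0 (min 1 x))" for x
  proof -
    have "(\<integral>\<^sup>+t. ennreal (g t) * indicator {..x} t \<partial>lborel)
        = (\<integral>\<^sup>+t. ennreal (g t) * indicator {..x} t \<partial>lebesgue)"
      using gm by (subst nn_integral_completion) auto
    also have "\<dots> = (\<integral>\<^sup>+t. ennreal (h t) * indicator {..x} t \<partial>lebesgue)"
      using hg_lebesgue by (intro nn_integral_cong_AE) auto
    finally show ?thesis using nn_integral_atMost_if_linear[OF hz total linear] by simp
  qed
  have const_rays: "(\<integral>\<^sup>+t. ennreal (T * indicator {0..1} t) * indicator {..x} t \<partial>lborel)
      = ennreal (T * max 0 (min 1 x))" for x
  proof -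
    have "(\<integral>\<^sup>+t. ennreal (T * indicator {0..1} t) * indicator {..x} t \<partial>lborel)
        = ennreal T * emeasure lborel ({0..1} \<inter> {..x})"
      by (subst nn_integral_cmult_indicator[symmetric]) (auto intro!: nn_integral_cong simp: indicator_def)
    also have "{0..1} \<inter> {..x} = (if x < 0 then {} else {0..min 1 x})" by auto
    finally show ?thesis using T by (auto simp: ennreal_mult min_def)
  qed
  have "AE t in lborel. ennreal (g t) = ennreal (T * indicator {0..1} t)"
    using gm by (intro density_lborel_AE_eq_if_atMost) (auto simp: g_rays const_rays)
  then have "AE t in lebesgue. ennreal (g t) = ennreal (T * indicator {0..1} t)" by (rule AE_completion)
  then show ?thesis using hg_lebesgue
  proof eventually_elim
    case (elim t)
    then show ?case using hnn[of t] T by auto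
  qed
qed

lemma lebesgue_affine_measurable_real:
  fixes b c :: real
  assumes "c \<noteq> 0"
  shows "(\<lambda>x. b + c * x) \<in> lebesgue \<rightarrow>\<^sub>M lebesgue"
  using lebesgue_affine_measurable[where c="\<lambda>_. c" and t=b] assms by auto

lemma negligible_affine_preimage:
  fixes b c :: real
  assumes "negligible N" "c \<noteq> 0"
  shows "negligible {x. b + c * x \<in> N}"
proof -
  have "(\<lambda>t. (t - b) / c) differentiable_on N"
    by (simp add: divide_inverse differentiable_on_mult differentiable_on_diff)
  then have "negligible ((\<lambda>t. (t - b) / c) ` N)"
    by (intro negligible_differentiable_image_negligible[OF _ assms(1)]) simp
  moreover have "{x. b + c * x \<in> N} \<subseteq> (\<lambda>t. (t - b) / c) ` N"
    using assms(2) by (auto intro!: image_eqI[where x="b + c * _"])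
  ultimately show ?thesis by (rule negligible_subset)
qed

lemma nn_integral_affine_sq_scale:
  fixes g :: "real \<Rightarrow> ennreal"
  assumes "g \<in> borel_measurable lebesgue" "0 < c"
  shows "ennreal (c^2) * (\<integral>\<^sup>+s. g (b + c * s) \<partial>lebesgue) = ennreal c * (\<integral>\<^sup>+t. g t \<partial>lebesgue)"
  using nn_integral_real_affine_lebesgue[OF assms(1), of c b] assms(2)
  by (simp add: power2_eq_square ennreal_mult mult.assoc)

abbreviation L01 :: "real measure" where "L01 \<equiv> lebesgue_on {0..1}"

lemma AE_L01I: "(\<And>t. t \<in> {0..1} \<Longrightarrow> P t) \<Longrightarrow> AE t in L01. P t"
  by (rule AE_I2) simp

lemma AE_L01_not_in_finite: "finite S \<Longrightarrow> AE t in L01. t \<notin> S"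
proof -
  assume "finite S"
  then have "AE t in lebesgue. t \<notin> S"
    by (intro AE_not_in) (use negligible_iff_null_sets negligible_finite in blast)
  then show ?thesis by (subst AE_restrict_space_iff) (auto elim: AE_mp)
qed

lemma AE_L01_mem: "AE t in L01. t \<in> {0..1}"
  by (rule AE_L01I)

lemma emeasure_L01: "emeasure L01 (space L01) = 1"
  by (simp add: emeasure_restrict_space)

definition avg_velocity :: "nat \<Rightarrow> (real \<Rightarrow> nat \<Rightarrow> real) \<Rightarrow> (real \<Rightarrow> nat \<Rightarrow> real)
    \<Rightarrow> (real \<Rightarrow> nat \<Rightarrow> real) \<Rightarrow> real \<Rightarrow> real" where
  "avg_velocity n f \<alpha> v t = (\<Sum>k<n. gcoef \<alpha> f t k * v t k)"

lemma sum_flux_eq_avg_velocity: "(\<Sum>k<n. flux n \<alpha> f v t k) = avg_velocity n f \<alpha> v t"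
  by (simp add: avg_velocity_def flux_def mult.commute)

locale admissible_path =
  fixes n :: nat and f0 f1 :: "nat \<Rightarrow> real" and f \<alpha> v :: "real \<Rightarrow> nat \<Rightarrow> real"
  assumes path: "f \<in> paths n f0 f1" and coef: "\<alpha> \<in> coeffs n" and vel: "velocity_field n f \<alpha> v"
begin

lemma pmf_on_path: "t \<in> {0..1} \<Longrightarrow> pmf_on n (f t)"
  using path by (auto simp: paths_def)

lemma component_piecewise_differentiable:
  "k \<le> n \<Longrightarrow> (\<lambda>t. f t k) piecewise_differentiable_on {0..1}"
  using path by (auto simp: paths_def)

lemma component_continuous: "k \<le> n \<Longrightarrow> continuous_on {0..1} (\<lambda>t. f t k)"
  by (rule piecewise_differentiable_on_imp_continuous_on[OF component_piecewise_differentiable])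

lemma component_measurable: "k \<le> n \<Longrightarrow> (\<lambda>t. f t k) \<in> borel_measurable L01"
  by (rule continuous_imp_measurable_on_sets_lebesgue[OF component_continuous]) auto

lemma gcoef_nonneg:
  assumes "t \<in> {0..1}" "k < n"
  shows "0 \<le> gcoef \<alpha> f t k"
proof -
  have "0 \<le> \<alpha> t (k+1)" "0 \<le> \<alpha> t k" "\<alpha> t k \<le> 1"
    using coef assms by (auto simp: coeffs_def)
  moreover have "0 \<le> f t (k+1)" "0 \<le> f t k" using pmf_on_path[OF assms(1)] by (auto simp: pmf_on_def)
  ultimately show ?thesis unfolding gcoef_def by (intro add_nonneg_nonneg mult_nonneg_nonneg) auto
qed

lemma sum_gcoef: "t \<in> {0..1} \<Longrightarrow> (\<Sum>k<n. gcoef \<alpha> f t k) = 1"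
  using sum_split_mass[of "\<alpha> t" n "f t"] pmf_on_path coef by (auto simp: gcoef_def coeffs_def pmf_on_def)

lemma gcoef_measurable: "k < n \<Longrightarrow> (\<lambda>t. gcoef \<alpha> f t k) \<in> borel_measurable L01"
proof -
  assume k: "k < n"
  have [measurable]: "(\<lambda>t. \<alpha> t j) \<in> borel_measurable L01" "(\<lambda>t. f t j) \<in> borel_measurable L01"
    if "j \<in> {k, k+1}" for j
    using coef component_measurable that k by (auto simp: coeffs_def)
  show ?thesis unfolding gcoef_def by measurable
qed

lemma velocity_measurable: "k < n \<Longrightarrow> (\<lambda>t. v t k) \<in> borel_measurable L01"
  using vel by (auto simp: velocity_field_def)

lemma beta_measurable: "beta n f \<alpha> v \<in> borel_measurable L01"
  unfolding beta_def[abs_def]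
  by (intro borel_measurable_sum borel_measurable_times borel_measurable_power
      gcoef_measurable velocity_measurable) auto

lemma avg_velocity_measurable: "avg_velocity n f \<alpha> v \<in> borel_measurable L01"
  unfolding avg_velocity_def[abs_def]
  by (intro borel_measurable_sum borel_measurable_times gcoef_measurable velocity_measurable) auto

lemma beta_minus_avg_velocity_sq:
  assumes "t \<in> {0..1}"
  shows "beta n f \<alpha> v t - (avg_velocity n f \<alpha> v t)^2
    = (\<Sum>k<n. gcoef \<alpha> f t k * (v t k - avg_velocity n f \<alpha> v t)^2)"
  using sum_weighted_sq_deviation[OF sum_gcoef[OF assms], of "v t" "avg_velocity n f \<alpha> v t"]
  unfolding beta_def avg_velocity_def by (simp add: power2_eq_square)

lemma avg_velocity_sq_le_beta:
  assumes "t \<in> {0..1}"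
  shows "(avg_velocity n f \<alpha> v t)^2 \<le> beta n f \<alpha> v t"
proof -
  have "0 \<le> (\<Sum>k<n. gcoef \<alpha> f t k * (v t k - avg_velocity n f \<alpha> v t)^2)"
    using gcoef_nonneg[OF assms] by (intro sum_nonneg mult_nonneg_nonneg) auto
  then show ?thesis using beta_minus_avg_velocity_sq[OF assms] by simp
qed

lemma beta_nonneg: "t \<in> {0..1} \<Longrightarrow> 0 \<le> beta n f \<alpha> v t"
  by (rule order_trans[OF zero_le_power2 avg_velocity_sq_le_beta])

lemma has_integral_mean_derivative:
  "((\<lambda>x. \<Sum>k\<le>n. real k * vector_derivative (\<lambda>t. f t k) (at x)) has_integral (mean n f1 - mean n f0)) {0..1}"
proof -
  obtain S where S: "\<And>k. k \<le> n \<Longrightarrow> finite (S k)"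
    "\<And>k x. k \<le> n \<Longrightarrow> x \<in> {0..1} - S k \<Longrightarrow> (\<lambda>t. f t k) differentiable (at x within {0..1})"
    using component_piecewise_differentiable unfolding piecewise_differentiable_on_def by metis
  have "((\<lambda>t. mean n (f t)) has_vector_derivative (\<Sum>k\<le>n. real k * vector_derivative (\<lambda>t. f t k) (at x)))
      (at x)" if x: "x \<in> {0<..<1} - (\<Union>k\<le>n. S k)" for x
  proof -
    have "((\<lambda>t. f t k) has_field_derivative vector_derivative (\<lambda>t. f t k) (at x)) (at x)" if "k \<le> n" for k
    proof -
      have "(\<lambda>t. f t k) differentiable (at x)"
        using S(2)[of k x] x that by (auto simp: at_within_Icc_at)
      then show ?thesis
        using vector_derivative_works has_real_derivative_iff_has_vector_derivative by blast
    qed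
    then show ?thesis
      unfolding mean_def has_real_derivative_iff_has_vector_derivative[symmetric]
      by (intro DERIV_sum DERIV_cmult) auto
  qed
  moreover have "continuous_on {0..1} (\<lambda>t. mean n (f t))"
    unfolding mean_def by (intro continuous_intros component_continuous) auto
  ultimately show ?thesis
    using path S(1) by (intro fundamental_theorem_of_calculus_interior_strong[where S="\<Union>k\<le>n. S k", THEN
        has_integral_eq_rhs]) (auto simp: paths_def)
qed

lemma component_vector_derivative_AE:
  obtains N where "negligible N"
    "\<And>x k. x \<in> {0<..<1} - N \<Longrightarrow> k \<le> n \<Longrightarrow> vector_derivative (\<lambda>t. f t k) (at x) = - nabla1 (flux n \<alpha> f v x) k"
proof -
  have "AE x in L01. \<forall>k\<le>n.
      ((\<lambda>s. f s k) has_real_derivative (- nabla1 (flux n \<alpha> f v x) k)) (at x within {0..1})"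
    using vel by (simp add: velocity_field_def)
  then obtain N where N: "negligible N" and NP: "\<And>x. x \<in> {0..1} \<Longrightarrow> x \<notin> N \<Longrightarrow> \<forall>k\<le>n.
      ((\<lambda>s. f s k) has_real_derivative (- nabla1 (flux n \<alpha> f v x) k)) (at x within {0..1})"
    by (rule AE_lebesgue_on_negligibleE) auto
  have deriv: "vector_derivative (\<lambda>t. f t k) (at x) = - nabla1 (flux n \<alpha> f v x) k"
    if "x \<in> {0<..<1} - N" "k \<le> n" for x k
  proof -
    have "((\<lambda>s. f s k) has_real_derivative (- nabla1 (flux n \<alpha> f v x) k)) (at x)"
      using NP[of x] that by (auto simp: at_within_Icc_at)
    then show ?thesis
      by (intro vector_derivative_at) (simp add: has_real_derivative_iff_has_vector_derivative)
  qed
  show ?thesis by (rule that[OF N deriv])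
qed

text \<open>The mean moves with the average velocity: \<open>\<lambda>' = \<Sum>\<^sub>k k \<partial>\<^sub>tf\<^sub>k = \<Sum>\<^sub>k flux\<^sub>k\<close> by
  summation by parts, since the flux vanishes at \<open>k = n\<close>.\<close>

lemma has_integral_avg_velocity:
  "(avg_velocity n f \<alpha> v has_integral (mean n f1 - mean n f0)) {0..1}"
proof -
  obtain N where N: "negligible N" and deriv: "\<And>x k. x \<in> {0<..<1} - N \<Longrightarrow> k \<le> n \<Longrightarrow>
      vector_derivative (\<lambda>t. f t k) (at x) = - nabla1 (flux n \<alpha> f v x) k"
    using component_vector_derivative_AE by blast
  show ?thesis
  proof (rule has_integral_spike[OF _ _ has_integral_mean_derivative])
    show "negligible (N \<union> {0,1})" using N by auto
  next
    fix x assume "x \<in> {0..1} - (N \<union> {0,1})"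
    then have "(\<Sum>k\<le>n. real k * vector_derivative (\<lambda>t. f t k) (at x))
        = (\<Sum>k\<le>n. real k * (- nabla1 (flux n \<alpha> f v x) k))"
      using deriv[of x] by simp
    also have "\<dots> = (\<Sum>k<n. flux n \<alpha> f v x k)"
      using sum_of_nat_mult_nabla1[of "flux n \<alpha> f v x" n] by (simp add: sum_negf flux_def)
    finally show "avg_velocity n f \<alpha> v x = (\<Sum>k\<le>n. real k * vector_derivative (\<lambda>t. f t k) (at x))"
      by (simp add: sum_flux_eq_avg_velocity)
  qed
qed

context
  assumes finite_energy: "path_length_sq n f \<alpha> v \<noteq> \<infinity>"
begin

lemma integrable_beta: "integrable L01 (beta n f \<alpha> v)"
  using finite_energy unfolding path_length_sq_def
  by (intro integrableI_nonneg[OF beta_measurable AE_L01I[OF beta_nonneg]]) (simp_all add: less_top)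

lemma integrable_avg_velocity_sq: "integrable L01 (\<lambda>t. (avg_velocity n f \<alpha> v t)^2)"
proof (rule Bochner_Integration.integrable_bound[OF integrable_beta])
  show "(\<lambda>t. (avg_velocity n f \<alpha> v t)^2) \<in> borel_measurable L01"
    using avg_velocity_measurable by measurable
  show "AE t in L01. norm ((avg_velocity n f \<alpha> v t)^2) \<le> norm (beta n f \<alpha> v t)"
    by (rule AE_L01I) (use avg_velocity_sq_le_beta beta_nonneg in auto)
qed

lemma integrable_avg_velocity: "integrable L01 (avg_velocity n f \<alpha> v)"
proof -
  have "integrable L01 (\<lambda>t. 1 + (avg_velocity n f \<alpha> v t)^2)"
    using integrable_avg_velocity_sq emeasure_L01
    by (intro Bochner_Integration.integrable_add finite_measure.integrable_const finite_measureI) auto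
  moreover have "\<bar>w\<bar> \<le> 1 + w^2" for w :: real
    using sum_power2_ge_zero[of "\<bar>w\<bar> - 1" 0] by (simp add: power2_diff power2_abs)
  ultimately show ?thesis
    by (intro Bochner_Integration.integrable_bound[OF _ avg_velocity_measurable]) auto
qed

lemma path_length_sq_eq_integral: "path_length_sq n f \<alpha> v = ennreal (\<integral>t. beta n f \<alpha> v t \<partial>L01)"
  unfolding path_length_sq_def
  by (rule nn_integral_eq_integral[OF integrable_beta AE_L01I[OF beta_nonneg]])

lemma integral_avg_velocity: "(\<integral>t. avg_velocity n f \<alpha> v t \<partial>L01) = mean n f1 - mean n f0"
  using has_integral_integral_lebesgue_on[OF integrable_avg_velocity] has_integral_avg_velocity
  by (auto intro: has_integral_unique)

lemma integral_avg_velocity_sq_ge: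
  "(mean n f1 - mean n f0)^2 \<le> (\<integral>t. (avg_velocity n f \<alpha> v t)^2 \<partial>L01)"
  using integral_sq_deviation(2)[OF emeasure_L01 integrable_avg_velocity integrable_avg_velocity_sq]
    integral_nonneg_AE[of "\<lambda>t. (avg_velocity n f \<alpha> v t - (mean n f1 - mean n f0))^2" L01]
  by (simp add: integral_avg_velocity)

lemma integral_avg_velocity_sq_le: "(\<integral>t. (avg_velocity n f \<alpha> v t)^2 \<partial>L01) \<le> (\<integral>t. beta n f \<alpha> v t \<partial>L01)"
  by (rule integral_mono_AE[OF integrable_avg_velocity_sq integrable_beta])
    (rule AE_L01I, rule avg_velocity_sq_le_beta)

end

lemma sq_mean_diff_le_path_length_sq:
  "ennreal ((mean n f1 - mean n f0)^2) \<le> path_length_sq n f \<alpha> v"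
proof (cases "path_length_sq n f \<alpha> v = \<infinity>")
  case False
  then show ?thesis
    using integral_avg_velocity_sq_ge integral_avg_velocity_sq_le path_length_sq_eq_integral
    by (simp add: ennreal_leI)
qed simp

lemma const_velocity_if_path_length_sq_eq:
  assumes eq: "path_length_sq n f \<alpha> v = ennreal ((mean n f1 - mean n f0)^2)"
  shows "AE t in L01. \<forall>k<n. gcoef \<alpha> f t k \<noteq> 0 \<longrightarrow> v t k = mean n f1 - mean n f0"
proof -
  let ?d = "mean n f1 - mean n f0" and ?W = "avg_velocity n f \<alpha> v"
  have fin: "path_length_sq n f \<alpha> v \<noteq> \<infinity>" using eq by simp
  note integrable_W = integrable_avg_velocity[OF fin] and integrable_W2 = integrable_avg_velocity_sq[OF fin]
  have "(\<integral>t. beta n f \<alpha> v t \<partial>L01) = ?d^2"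
    using eq path_length_sq_eq_integral[OF fin] integral_nonneg_AE[OF AE_L01I[OF beta_nonneg]] by simp
  then have W2: "(\<integral>t. (?W t)^2 \<partial>L01) = ?d^2"
    and beta_W2: "(\<integral>t. beta n f \<alpha> v t \<partial>L01) = (\<integral>t. (?W t)^2 \<partial>L01)"
    using integral_avg_velocity_sq_ge[OF fin] integral_avg_velocity_sq_le[OF fin] by simp_all
  have "(\<integral>t. (?W t - ?d)^2 \<partial>L01) = 0"
    using integral_sq_deviation(2)[OF emeasure_L01 integrable_W integrable_W2]
    by (simp add: W2 integral_avg_velocity[OF fin])
  then have W_eq: "AE t in L01. (?W t - ?d)^2 = 0"
    using integral_sq_deviation(1)[OF emeasure_L01 integrable_W integrable_W2]
    by (subst (asm) integral_nonneg_eq_0_iff_AE) auto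
  have "(\<integral>t. beta n f \<alpha> v t - (?W t)^2 \<partial>L01) = 0"
    using beta_W2 integrable_beta[OF fin] integrable_W2 by simp
  then have beta_eq: "AE t in L01. beta n f \<alpha> v t - (?W t)^2 = 0"
    using integrable_beta[OF fin] integrable_W2
    by (subst (asm) integral_nonneg_eq_0_iff_AE) (auto intro!: AE_L01I avg_velocity_sq_le_beta)
  from W_eq beta_eq AE_L01_mem show ?thesis
  proof eventually_elim
    case (elim t)
    have "(\<Sum>k<n. gcoef \<alpha> f t k * (v t k - ?W t)^2) = 0"
      using beta_minus_avg_velocity_sq[OF elim(3)] elim(2) by simp
    then have "gcoef \<alpha> f t k * (v t k - ?W t)^2 = 0" if "k < n" for k
      using that sum_nonneg_eq_0_iff[of "{..<n}" "\<lambda>k. gcoef \<alpha> f t k * (v t k - ?W t)^2"]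
        gcoef_nonneg[OF elim(3)] by auto
    then show ?case using elim(1) by auto
  qed
qed

lemma path_length_sq_if_const_velocity:
  assumes const: "AE t in L01. \<forall>k<n. gcoef \<alpha> f t k \<noteq> 0 \<longrightarrow> v t k = d"
  shows "path_length_sq n f \<alpha> v = ennreal (d^2)" and "mean n f1 - mean n f0 = d"
proof -
  have ae: "AE t in L01. beta n f \<alpha> v t = d^2 \<and> avg_velocity n f \<alpha> v t = d"
    using const AE_L01_mem
  proof eventually_elim
    case (elim t)
    have "beta n f \<alpha> v t = (\<Sum>k<n. gcoef \<alpha> f t k * d^2)"
      unfolding beta_def using elim(1) by (intro sum.cong) auto
    moreover have "avg_velocity n f \<alpha> v t = (\<Sum>k<n. gcoef \<alpha> f t k * d)"
      unfolding avg_velocity_def using elim(1) by (intro sum.cong) auto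
    ultimately show ?case using sum_gcoef[OF elim(2)] by (simp add: sum_distrib_right[symmetric])
  qed
  have "path_length_sq n f \<alpha> v = (\<integral>\<^sup>+ t. ennreal (d^2) \<partial>L01)"
    unfolding path_length_sq_def by (rule nn_integral_cong_AE) (use ae in auto)
  also have "\<dots> = ennreal (d^2)"
    by (simp add: emeasure_restrict_space)
  finally show energy: "path_length_sq n f \<alpha> v = ennreal (d^2)" .
  have "(\<integral>t. avg_velocity n f \<alpha> v t \<partial>L01) = (\<integral>t. d \<partial>L01)"
    by (rule integral_cong_AE) (use ae avg_velocity_measurable in auto)
  then show "mean n f1 - mean n f0 = d"
    using integral_avg_velocity energy by (simp add: measure_restrict_space)
qed

end

section \<open>The lower bound and its equality case\<close>

lemma Vn_sq_ge_sq_mean_diff: "ennreal ((mean n f1 - mean n f0)^2) \<le> Vn_sq n f0 f1"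
  unfolding Vn_sq_def
  by (rule Inf_greatest) (auto intro: admissible_path.sq_mean_diff_le_path_length_sq admissible_path.intro)

lemma Vn_eq_sqrt: "Vn_sq n f0 f1 = ennreal r \<Longrightarrow> 0 \<le> r \<Longrightarrow> Vn n f0 f1 = ennreal (sqrt r)"
  by (simp add: Vn_def)

lemma Vn_ge_abs_mean_diff: "ennreal \<bar>mean n f0 - mean n f1\<bar> \<le> Vn n f0 f1"
proof (cases "Vn_sq n f0 f1 = \<infinity>")
  case False
  then obtain r where r: "Vn_sq n f0 f1 = ennreal r" "0 \<le> r" by (cases "Vn_sq n f0 f1") auto
  have "(mean n f1 - mean n f0)^2 \<le> r" using Vn_sq_ge_sq_mean_diff[of n f1 f0] r by simp
  then have "\<bar>mean n f0 - mean n f1\<bar> \<le> sqrt r"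
    by (metis abs_minus_commute real_le_rsqrt power2_abs)
  then show ?thesis using Vn_eq_sqrt[OF r] by (simp add: ennreal_leI)
qed (simp add: Vn_def)

lemma Vn_eq_abs_mean_diff_iff:
  assumes "is_geodesic n f0 f1 f \<alpha> v"
  shows "Vn n f0 f1 = ennreal \<bar>mean n f0 - mean n f1\<bar> \<longleftrightarrow>
         (\<exists>c. AE t in L01. \<forall>k<n. gcoef \<alpha> f t k \<noteq> 0 \<longrightarrow> v t k = c)"
proof -
  interpret admissible_path n f0 f1 f \<alpha> v
    using assms by (unfold_locales) (auto simp: is_geodesic_def)
  have geo: "path_length_sq n f \<alpha> v = Vn_sq n f0 f1" using assms by (simp add: is_geodesic_def)
  show ?thesis
  proof
    assume eq: "Vn n f0 f1 = ennreal \<bar>mean n f0 - mean n f1\<bar>"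
    then obtain r where r: "Vn_sq n f0 f1 = ennreal r" "0 \<le> r"
      by (cases "Vn_sq n f0 f1") (auto simp: Vn_def)
    have "sqrt r = \<bar>mean n f0 - mean n f1\<bar>"
      using eq Vn_eq_sqrt[OF r] r(2) ennreal_inj[of "sqrt r" "\<bar>mean n f0 - mean n f1\<bar>"] by simp
    then have "r = (mean n f1 - mean n f0)^2"
      using r(2) by (metis abs_minus_commute power2_abs real_sqrt_pow2)
    then show "\<exists>c. AE t in L01. \<forall>k<n. gcoef \<alpha> f t k \<noteq> 0 \<longrightarrow> v t k = c"
      using const_velocity_if_path_length_sq_eq geo r by auto
  next
    assume "\<exists>c. AE t in L01. \<forall>k<n. gcoef \<alpha> f t k \<noteq> 0 \<longrightarrow> v t k = c"
    then obtain c where "AE t in L01. \<forall>k<n. gcoef \<alpha> f t k \<noteq> 0 \<longrightarrow> v t k = c" by blast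
    note energy = path_length_sq_if_const_velocity[OF this]
    show "Vn n f0 f1 = ennreal \<bar>mean n f0 - mean n f1\<bar>"
      using Vn_eq_sqrt[of n f0 f1 "c^2"] energy geo by (simp add: abs_minus_commute)
  qed
qed

section \<open>A path of finite energy\<close>

text \<open>The bridge mixes \<open>f0\<close>, the uniform distribution and \<open>f1\<close> with weights
  \<open>1 - s - w/2\<close>, \<open>w\<close> and \<open>s - w/2\<close>, where \<open>s = t\<^sup>2(3-2t)\<close> and \<open>w = t\<^sup>2(1-t)\<^sup>2\<close>. All weights
  have derivatives of size \<open>O(t(1-t))\<close>, so the flux is \<open>O(t(1-t))\<close>, while the uniform part keeps
  every \<open>g\<^sub>k\<close> above a multiple of \<open>(t(1-t))\<^sup>2\<close>; hence \<open>g\<^sub>k v\<^sub>k\<^sup>2 = flux\<^sup>2/g\<^sub>k\<close> stays bounded.\<close>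

definition bridge_w0 :: "real \<Rightarrow> real" where "bridge_w0 t = (1-t)^2*(1+2*t) - t^2*(1-t)^2/2"
definition bridge_wU :: "real \<Rightarrow> real" where "bridge_wU t = t^2*(1-t)^2"
definition bridge_w1 :: "real \<Rightarrow> real" where "bridge_w1 t = t^2*(3-2*t) - t^2*(1-t)^2/2"
definition bridge_dw0 :: "real \<Rightarrow> real" where "bridge_dw0 t = t*(1-t)*(2*t-7)"
definition bridge_dwU :: "real \<Rightarrow> real" where "bridge_dwU t = t*(1-t)*(2-4*t)"
definition bridge_dw1 :: "real \<Rightarrow> real" where "bridge_dw1 t = t*(1-t)*(5+2*t)"

lemma sum_bridge_weights: "bridge_w0 t + bridge_wU t + bridge_w1 t = 1"
  by (simp add: bridge_w0_def bridge_wU_def bridge_w1_def power2_eq_square algebra_simps)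

lemma sum_bridge_dweights: "bridge_dw0 t + bridge_dwU t + bridge_dw1 t = 0"
  by (simp add: bridge_dw0_def bridge_dwU_def bridge_dw1_def algebra_simps)

lemma bridge_w0_deriv: "(bridge_w0 has_real_derivative bridge_dw0 t) (at t)"
proof -
  have "((\<lambda>t. (1-t)^2*(1+2*t) - t^2*(1-t)^2/2) has_real_derivative
      (2*(1-t)*(-1)*(1+2*t) + (1-t)^2*2 - (2*t*(1-t)^2 + t^2*(2*(1-t)*(-1)))/2)) (at t)"
    by (auto intro!: derivative_eq_intros)
  moreover have "(2*(1-t)*(-1)*(1+2*t) + (1-t)^2*2 - (2*t*(1-t)^2 + t^2*(2*(1-t)*(-1)))/2) = bridge_dw0 t"
    by (simp add: bridge_dw0_def power2_eq_square field_simps)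
  ultimately show ?thesis by (simp add: bridge_w0_def[abs_def])
qed

lemma bridge_wU_deriv: "(bridge_wU has_real_derivative bridge_dwU t) (at t)"
proof -
  have "((\<lambda>t. t^2*(1-t)^2) has_real_derivative (2*t*(1-t)^2 + t^2*(2*(1-t)*(-1)))) (at t)"
    by (auto intro!: derivative_eq_intros)
  moreover have "2*t*(1-t)^2 + t^2*(2*(1-t)*(-1)) = bridge_dwU t"
    by (simp add: bridge_dwU_def power2_eq_square field_simps)
  ultimately show ?thesis by (simp add: bridge_wU_def[abs_def])
qed

lemma bridge_w1_deriv: "(bridge_w1 has_real_derivative bridge_dw1 t) (at t)"
proof -
  have "((\<lambda>t. t^2*(3-2*t) - t^2*(1-t)^2/2) has_real_derivative
     (2*t*(3-2*t) + t^2*(-2) - (2*t*(1-t)^2 + t^2*(2*(1-t)*(-1)))/2)) (at t)"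
    by (auto intro!: derivative_eq_intros)
  moreover have "(2*t*(3-2*t) + t^2*(-2) - (2*t*(1-t)^2 + t^2*(2*(1-t)*(-1)))/2) = bridge_dw1 t"
    by (simp add: bridge_dw1_def power2_eq_square field_simps)
  ultimately show ?thesis by (simp add: bridge_w1_def[abs_def])
qed

lemma bridge_weights_nonneg:
  assumes t: "t \<in> {0..1}"
  shows "0 \<le> bridge_w0 t" "0 \<le> bridge_wU t" "0 \<le> bridge_w1 t"
proof -
  have "t^2 \<le> 1" "(1-t)^2 \<le> 1" using t by (auto simp: power_le_one)
  moreover have "bridge_w0 t = (1-t)^2 * ((1+2*t) - t^2/2)" "bridge_w1 t = t^2 * ((3-2*t) - (1-t)^2/2)"
    by (simp_all add: bridge_w0_def bridge_w1_def algebra_simps)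
  ultimately show "0 \<le> bridge_w0 t" "0 \<le> bridge_w1 t" using t by auto
  show "0 \<le> bridge_wU t" by (simp add: bridge_wU_def)
qed

lemma abs_bridge_dweights_le:
  assumes "t \<in> {0..1}"
  shows "\<bar>bridge_dw0 t\<bar> \<le> t*(1-t) * 7" "\<bar>bridge_dwU t\<bar> \<le> t*(1-t) * 2" "\<bar>bridge_dw1 t\<bar> \<le> t*(1-t) * 7"
proof -
  have scale: "\<bar>t*(1-t) * c\<bar> \<le> t*(1-t) * B" if "\<bar>c\<bar> \<le> B" for c B
    using assms that by (simp add: abs_mult mult_left_mono)
  show "\<bar>bridge_dw0 t\<bar> \<le> t*(1-t) * 7" unfolding bridge_dw0_def by (rule scale) (use assms in auto)
  show "\<bar>bridge_dwU t\<bar> \<le> t*(1-t) * 2" unfolding bridge_dwU_def by (rule scale) (use assms in auto)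
  show "\<bar>bridge_dw1 t\<bar> \<le> t*(1-t) * 7" unfolding bridge_dw1_def by (rule scale) (use assms in auto)
qed

lemma bridge_wU_eq: "bridge_wU t = (t*(1-t))^2" by (simp add: bridge_wU_def power_mult_distrib)

definition uniform_pmf :: "nat \<Rightarrow> nat \<Rightarrow> real" where
  "uniform_pmf n k = (if k \<le> n then 1 / (real n + 1) else 0)"

definition bridge :: "nat \<Rightarrow> (nat \<Rightarrow> real) \<Rightarrow> (nat \<Rightarrow> real) \<Rightarrow> real \<Rightarrow> nat \<Rightarrow> real" where
  "bridge n f0 f1 t k = bridge_w0 t * f0 k + bridge_wU t * uniform_pmf n k + bridge_w1 t * f1 k"

definition bridge_deriv :: "nat \<Rightarrow> (nat \<Rightarrow> real) \<Rightarrow> (nat \<Rightarrow> real) \<Rightarrow> real \<Rightarrow> nat \<Rightarrow> real" where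
  "bridge_deriv n f0 f1 t k = bridge_dw0 t * f0 k + bridge_dwU t * uniform_pmf n k + bridge_dw1 t * f1 k"

definition bridge_flux :: "nat \<Rightarrow> (nat \<Rightarrow> real) \<Rightarrow> (nat \<Rightarrow> real) \<Rightarrow> real \<Rightarrow> nat \<Rightarrow> real" where
  "bridge_flux n f0 f1 t k = - (\<Sum>j\<le>k. bridge_deriv n f0 f1 t j)"

definition half_coeffs :: "nat \<Rightarrow> real \<Rightarrow> nat \<Rightarrow> real" where
  "half_coeffs n t k = (if k = 0 then 0 else if n \<le> k then 1 else 1/2)"

definition bridge_velocity :: "nat \<Rightarrow> (nat \<Rightarrow> real) \<Rightarrow> (nat \<Rightarrow> real) \<Rightarrow> real \<Rightarrow> nat \<Rightarrow> real" where
  "bridge_velocity n f0 f1 t k = bridge_flux n f0 f1 t k / gcoef (half_coeffs n) (bridge n f0 f1) t k"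

lemma pmf_on_uniform_pmf: "pmf_on n (uniform_pmf n)"
  by (simp add: pmf_on_def uniform_pmf_def)

lemma bridge_has_derivative:
  "((\<lambda>t. bridge n f0 f1 t k) has_real_derivative bridge_deriv n f0 f1 x k) (at x)"
  unfolding bridge_def[abs_def] bridge_deriv_def
  by (intro DERIV_add DERIV_cmult_right bridge_w0_deriv bridge_wU_deriv bridge_w1_deriv)

lemma bridge_in_paths:
  assumes "pmf_on n f0" "pmf_on n f1"
  shows "bridge n f0 f1 \<in> paths n f0 f1"
proof -
  have "pmf_on n (bridge n f0 f1 t)" if t: "t \<in> {0..1}" for t
  proof -
    have "(\<Sum>k\<le>n. bridge n f0 f1 t k)
        = bridge_w0 t * (\<Sum>k\<le>n. f0 k) + bridge_wU t * (\<Sum>k\<le>n. uniform_pmf n k) + bridge_w1 t * (\<Sum>k\<le>n. f1 k)"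
      by (simp add: bridge_def sum.distrib sum_distrib_left)
    also have "\<dots> = 1"
      using assms sum_bridge_weights[of t] pmf_on_uniform_pmf[of n] by (simp add: pmf_on_def)
    finally show ?thesis using assms bridge_weights_nonneg[OF t]
      by (auto simp: pmf_on_def bridge_def uniform_pmf_def intro!: add_nonneg_nonneg mult_nonneg_nonneg)
  qed
  moreover have "(\<lambda>t. bridge n f0 f1 t k) piecewise_differentiable_on {0..1}" for k
  proof (rule differentiable_imp_piecewise_differentiable)
    fix x
    show "(\<lambda>t. bridge n f0 f1 t k) differentiable at x within {0..1}"
      using bridge_has_derivative real_differentiable_def differentiable_at_withinI by blast
  qed
  moreover have "bridge n f0 f1 0 = f0" "bridge n f0 f1 1 = f1"
    by (auto simp: bridge_def bridge_w0_def bridge_wU_def bridge_w1_def fun_eq_iff)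
  ultimately show ?thesis by (auto simp: paths_def)
qed

lemma half_coeffs_in_coeffs: "1 \<le> n \<Longrightarrow> half_coeffs n \<in> coeffs n" by (auto simp: coeffs_def half_coeffs_def)

lemma gcoef_bridge_ge:
  assumes "pmf_on n f0" "pmf_on n f1" "t \<in> {0..1}" "k < n"
  shows "bridge_wU t / (2 * (real n + 1)) \<le> gcoef (half_coeffs n) (bridge n f0 f1) t k"
proof -
  note nn = bridge_weights_nonneg[OF assms(3)]
  have fnn: "0 \<le> f0 j" "0 \<le> f1 j" for j using assms by (auto simp: pmf_on_def)
  have a1: "1/2 \<le> half_coeffs n t (k+1)" "half_coeffs n t (k+1) \<le> 1" "half_coeffs n t k \<le> 1"
    using assms(4) by (auto simp: half_coeffs_def)
  have fk: "0 \<le> bridge n f0 f1 t k" using nn fnn by (auto simp: bridge_def uniform_pmf_def)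
  have "bridge_wU t / (real n + 1) \<le> bridge n f0 f1 t (k+1)"
    using nn fnn assms(4) by (auto simp: bridge_def uniform_pmf_def)
  then have "1/2 * (bridge_wU t / (real n + 1)) \<le> half_coeffs n t (k+1) * bridge n f0 f1 t (k+1)"
    using a1 nn by (intro mult_mono) auto
  moreover have "0 \<le> (1 - half_coeffs n t k) * bridge n f0 f1 t k" using a1 fk by auto
  ultimately show ?thesis by (simp add: gcoef_def)
qed

lemma sum_bridge_deriv:
  assumes "pmf_on n f0" "pmf_on n f1"
  shows "(\<Sum>j\<le>n. bridge_deriv n f0 f1 t j) = 0"
proof -
  have "(\<Sum>j\<le>n. bridge_deriv n f0 f1 t j)
      = bridge_dw0 t * (\<Sum>k\<le>n. f0 k) + bridge_dwU t * (\<Sum>k\<le>n. uniform_pmf n k) + bridge_dw1 t * (\<Sum>k\<le>n. f1 k)"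
    by (simp add: bridge_deriv_def sum.distrib sum_distrib_left)
  then show ?thesis
    using assms sum_bridge_dweights[of t] pmf_on_uniform_pmf[of n] by (simp add: pmf_on_def)
qed

lemma abs_bridge_flux_le:
  assumes "pmf_on n f0" "pmf_on n f1" "t \<in> {0..1}" "k \<le> n"
  shows "\<bar>bridge_flux n f0 f1 t k\<bar> \<le> 16 * (t * (1 - t))"
proof -
  have "bridge_flux n f0 f1 t k
      = - (bridge_dw0 t * (\<Sum>j\<le>k. f0 j) + bridge_dwU t * (\<Sum>j\<le>k. uniform_pmf n j)
          + bridge_dw1 t * (\<Sum>j\<le>k. f1 j))"
    by (simp add: bridge_flux_def bridge_deriv_def sum.distrib sum_distrib_left)
  then have "\<bar>bridge_flux n f0 f1 t k\<bar> \<le> \<bar>bridge_dw0 t\<bar> * \<bar>\<Sum>j\<le>k. f0 j\<bar>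
      + \<bar>bridge_dwU t\<bar> * \<bar>\<Sum>j\<le>k. uniform_pmf n j\<bar> + \<bar>bridge_dw1 t\<bar> * \<bar>\<Sum>j\<le>k. f1 j\<bar>"
    by (simp add: abs_mult[symmetric])
  also have "\<dots> \<le> \<bar>bridge_dw0 t\<bar> * 1 + \<bar>bridge_dwU t\<bar> * 1 + \<bar>bridge_dw1 t\<bar> * 1"
    using pmf_on_partial_sum_bounds[OF assms(1)] pmf_on_partial_sum_bounds[OF assms(2)]
      pmf_on_partial_sum_bounds[OF pmf_on_uniform_pmf]
      assms(4)
    by (intro add_mono mult_left_mono) auto
  also have "\<dots> \<le> 16 * (t * (1 - t))" using abs_bridge_dweights_le[OF assms(3)] by simp
  finally show ?thesis .
qed

lemma gcoef_bridge_pos: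
  assumes "pmf_on n f0" "pmf_on n f1" "t \<in> {0<..<1}" "k < n"
  shows "0 < gcoef (half_coeffs n) (bridge n f0 f1) t k"
proof -
  have "0 < bridge_wU t" using assms(3) by (simp add: bridge_wU_def)
  then have "0 < bridge_wU t / (2 * (real n + 1))" by simp
  then show ?thesis using gcoef_bridge_ge[OF assms(1,2) _ assms(4), of t] assms(3) by auto
qed

lemma continuous_bridge_deriv: "continuous_on S (\<lambda>t. bridge_deriv n f0 f1 t k)"
  unfolding bridge_deriv_def bridge_dw0_def bridge_dwU_def bridge_dw1_def by (intro continuous_intros)

lemma continuous_bridge: "continuous_on S (\<lambda>t. bridge n f0 f1 t k)"
  unfolding bridge_def bridge_w0_def bridge_wU_def bridge_w1_def by (intro continuous_intros) auto

lemma nabla1_bridge_flux: "- nabla1 (bridge_flux n f0 f1 t) k = bridge_deriv n f0 f1 t k"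
  by (cases k) (simp_all add: nabla1_def bridge_flux_def)

lemma bridge_velocity_field:
  assumes p0: "pmf_on n f0" and p1: "pmf_on n f1"
  shows "velocity_field n (bridge n f0 f1) (half_coeffs n) (bridge_velocity n f0 f1)"
  unfolding velocity_field_def
proof (intro conjI allI impI)
  fix k assume "k < n"
  have "(\<lambda>t. bridge_flux n f0 f1 t k) \<in> borel_measurable L01"
    unfolding bridge_flux_def
    by (intro continuous_imp_measurable_on_sets_lebesgue continuous_intros continuous_bridge_deriv) auto
  moreover have "(\<lambda>t. gcoef (half_coeffs n) (bridge n f0 f1) t k) \<in> borel_measurable L01"
    unfolding gcoef_def half_coeffs_def
    by (intro continuous_imp_measurable_on_sets_lebesgue continuous_intros continuous_bridge) auto
  ultimately show "(\<lambda>t. bridge_velocity n f0 f1 t k) \<in> borel_measurable L01"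
    unfolding bridge_velocity_def by (rule borel_measurable_divide)
next
  have "AE t in L01. t \<notin> {0,1}" by (rule AE_L01_not_in_finite) auto
  then show "AE t in L01. \<forall>k\<le>n. ((\<lambda>s. bridge n f0 f1 s k) has_real_derivative
      - nabla1 (flux n (half_coeffs n) (bridge n f0 f1) (bridge_velocity n f0 f1) t) k) (at t within {0..1})"
    using AE_L01_mem
  proof eventually_elim
    case (elim t)
    then have t: "t \<in> {0<..<1}" by auto
    have flux_eq:
      "flux n (half_coeffs n) (bridge n f0 f1) (bridge_velocity n f0 f1) t j = bridge_flux n f0 f1 t j"
      if "j \<le> n" for j
      using that gcoef_bridge_pos[OF p0 p1 t, of j] sum_bridge_deriv[OF p0 p1, of t]
      by (cases "j < n") (auto simp: flux_def bridge_velocity_def bridge_flux_def)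
    have "- nabla1 (flux n (half_coeffs n) (bridge n f0 f1) (bridge_velocity n f0 f1) t) k
        = bridge_deriv n f0 f1 t k" if "k \<le> n" for k
    proof -
      have "nabla1 (flux n (half_coeffs n) (bridge n f0 f1) (bridge_velocity n f0 f1) t) k
          = nabla1 (bridge_flux n f0 f1 t) k"
        using that by (intro nabla1_cong flux_eq) simp
      then show ?thesis using nabla1_bridge_flux by simp
    qed
    then show ?case by (auto intro: has_field_derivative_at_within bridge_has_derivative)
  qed
qed

lemma bridge_energy_term_le:
  assumes p0: "pmf_on n f0" and p1: "pmf_on n f1" and t: "t \<in> {0..1}" and k: "k < n"
  shows "gcoef (half_coeffs n) (bridge n f0 f1) t k * (bridge_velocity n f0 f1 t k)^2 \<le> 512 * (real n + 1)"
proof -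
  define q g F where "q = t * (1 - t)" and "g = gcoef (half_coeffs n) (bridge n f0 f1) t k"
    and "F = bridge_flux n f0 f1 t k"
  have F_le: "\<bar>F\<bar> \<le> 16 * q" using abs_bridge_flux_le[OF p0 p1 t, of k] k by (simp add: F_def q_def)
  have g_ge: "q^2 / (2 * (real n + 1)) \<le> g"
    using gcoef_bridge_ge[OF p0 p1 t k] by (simp add: g_def q_def bridge_wU_eq)
  have "gcoef (half_coeffs n) (bridge n f0 f1) t k * (bridge_velocity n f0 f1 t k)^2 = F^2 / g"
    by (simp add: g_def F_def bridge_velocity_def power2_eq_square)
  moreover have "F^2 / g \<le> 512 * (real n + 1)"
  proof (cases "q = 0")
    case False
    then have "0 < q" using t by (simp add: q_def)
    have "F^2 \<le> (16 * q)^2" using F_le by (metis abs_ge_zero power2_abs power_mono)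
    then have "F^2 / g \<le> (16 * q)^2 / (q^2 / (2 * (real n + 1)))"
      using g_ge \<open>0 < q\<close> by (intro frac_le) auto
    also have "\<dots> = 512 * (real n + 1)" using \<open>0 < q\<close> by (simp add: power2_eq_square field_simps)
    finally show ?thesis .
  qed (use F_le in simp)
  ultimately show ?thesis by simp
qed

lemma beta_bridge_le:
  assumes "pmf_on n f0" "pmf_on n f1" "t \<in> {0..1}"
  shows "beta n (bridge n f0 f1) (half_coeffs n) (bridge_velocity n f0 f1) t \<le> real n * (512 * (real n + 1))"
proof -
  have "beta n (bridge n f0 f1) (half_coeffs n) (bridge_velocity n f0 f1) t \<le> (\<Sum>k<n. 512 * (real n + 1))"
    unfolding beta_def using bridge_energy_term_le[OF assms] by (intro sum_mono) auto
  then show ?thesis by simp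
qed

lemma Vn_sq_finite:
  assumes n: "1 \<le> n" and p0: "pmf_on n f0" and p1: "pmf_on n f1"
  shows "Vn_sq n f0 f1 \<noteq> \<infinity>"
proof -
  have "Vn_sq n f0 f1 \<le> path_length_sq n (bridge n f0 f1) (half_coeffs n) (bridge_velocity n f0 f1)"
    unfolding Vn_sq_def
    by (rule Inf_lower)
      (use bridge_in_paths[OF p0 p1] half_coeffs_in_coeffs[OF n] bridge_velocity_field[OF p0 p1] in blast)
  also have "\<dots> \<le> (\<integral>\<^sup>+ t. ennreal (real n * (512 * (real n + 1))) \<partial>L01)"
    unfolding path_length_sq_def
    by (intro nn_integral_mono ennreal_leI beta_bridge_le[OF p0 p1]) auto
  also have "\<dots> = ennreal (real n * (512 * (real n + 1)))"
    by (simp add: emeasure_restrict_space)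
  finally show ?thesis by (auto simp: top_unique)
qed

section \<open>Piecewise linear reparametrisation\<close>

definition kink :: "real \<Rightarrow> real \<Rightarrow> real \<Rightarrow> real" where
  "kink a m s = (if s \<le> m then (a/m) * s else a + (1-a)/(1-m) * (s-m))"

definition kink_slope :: "real \<Rightarrow> real \<Rightarrow> real \<Rightarrow> real" where
  "kink_slope a m s = (if s \<le> m then a/m else (1-a)/(1-m))"

locale kink_params =
  fixes a m :: real
  assumes a: "0 < a" "a < 1" and m: "0 < m" "m < 1"
begin

lemma kink_slopes_pos: "0 < a/m" "0 < (1-a)/(1-m)"
  using a m by auto

lemma kink_constants: "(a/m) * m = a" "a < a/m" "(a - (1-a)/(1-m) * m) + (1-a)/(1-m) = 1"
  using a m by (simp_all add: field_simps)

lemma kink_affine: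
  "kink a m s = (if s \<le> m then 0 + (a/m) * s else (a - (1-a)/(1-m) * m) + (1-a)/(1-m) * s)"
  by (simp add: kink_def right_diff_distrib)

lemma kink_strict_mono: "strict_mono (kink a m)"
proof (rule strict_monoI)
  fix s s' :: real assume "s < s'"
  note slopes = kink_slopes_pos
  consider "s' \<le> m" | "s \<le> m" "m < s'" | "m < s" using \<open>s < s'\<close> by linarith
  then show "kink a m s < kink a m s'"
  proof cases
    case 1
    have "(a/m) * s < (a/m) * s'" using \<open>s < s'\<close> slopes by (intro mult_strict_left_mono)
    then show ?thesis using 1 \<open>s < s'\<close> by (simp add: kink_def)
  next
    case 2
    have "(a/m) * s \<le> (a/m) * m" using 2 slopes by (intro mult_left_mono) auto
    moreover have "0 < (1-a)/(1-m) * (s' - m)" using 2 slopes by (intro mult_pos_pos) auto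
    ultimately show ?thesis using 2 m by (simp add: kink_def)
  next
    case 3
    have "(1-a)/(1-m) * (s - m) < (1-a)/(1-m) * (s' - m)"
      using \<open>s < s'\<close> slopes by (intro mult_strict_left_mono) auto
    then show ?thesis using 3 \<open>s < s'\<close> by (simp add: kink_def)
  qed
qed

lemma kink_0: "kink a m 0 = 0"
  using m by (simp add: kink_def)

lemma kink_1: "kink a m 1 = 1"
  using a m by (simp add: kink_def field_simps)

lemma continuous_kink: "continuous_on UNIV (kink a m)"
proof -
  have "continuous_on ({..m} \<union> {m..}) (kink a m)"
    unfolding kink_def by (rule continuous_on_cases) (use m in \<open>auto intro!: continuous_intros\<close>)
  moreover have "{..m} \<union> {m..} = (UNIV :: real set)" by auto
  ultimately show ?thesis by simp
qed

lemma kink_in_unit: "s \<in> {0..1} \<Longrightarrow> kink a m s \<in> {0..1}"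
  using strict_mono_less_eq[OF kink_strict_mono] kink_0 kink_1 by (metis atLeastAtMost_iff)

lemma kink_image: "kink a m ` {0..1} = {0..1}"
proof
  show "kink a m ` {0..1} \<subseteq> {0..1}" using kink_in_unit by auto
  show "{0..1} \<subseteq> kink a m ` {0..1}"
  proof
    fix y :: real assume y: "y \<in> {0..1}"
    have "\<exists>x\<ge>0. x \<le> 1 \<and> kink a m x = y"
      using continuous_kink y kink_0 kink_1
      by (intro IVT) (auto simp: continuous_on_eq_continuous_at)
    then show "y \<in> kink a m ` {0..1}" by auto
  qed
qed

lemma kink_has_derivative: "s \<noteq> m \<Longrightarrow> (kink a m has_real_derivative kink_slope a m s) (at s)"
proof (cases "s < m")
  case True
  have "((\<lambda>s. (a/m) * s) has_real_derivative kink_slope a m s) (at s)"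
    using True m by (auto intro!: derivative_eq_intros simp: kink_slope_def)
  then show ?thesis
    by (rule has_field_derivative_transform_within_open[where S="{..<m}"])
      (use True m in \<open>auto simp: kink_def\<close>)
next
  case False
  moreover assume "s \<noteq> m"
  ultimately have "m < s" by simp
  have "((\<lambda>s. a + (1-a)/(1-m) * (s-m)) has_real_derivative kink_slope a m s) (at s)"
    using \<open>m < s\<close> m by (auto intro!: derivative_eq_intros simp: kink_slope_def)
  then show ?thesis
    by (rule has_field_derivative_transform_within_open[where S="{m<..}"])
      (use \<open>m < s\<close> in \<open>auto simp: kink_def\<close>)
qed

lemma kink_piecewise_differentiable: "kink a m piecewise_differentiable_on {0..1}"
  unfolding piecewise_differentiable_on_def
proof (intro conjI exI[of _ "{m}"])
  show "continuous_on {0..1} (kink a m)" using continuous_kink by (rule continuous_on_subset) auto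
  show "\<forall>x\<in>{0..1} - {m}. kink a m differentiable at x within {0..1}"
    using kink_has_derivative real_differentiable_def differentiable_at_withinI by blast
qed simp

lemma measurable_comp_kink:
  fixes h :: "real \<Rightarrow> real"
  assumes h: "h \<in> borel_measurable L01"
  shows "(\<lambda>s. h (kink a m s)) \<in> borel_measurable L01"
proof -
  define h0 where "h0 x = (if x \<in> {0..1} then h x else 0)" for x
  have h0: "h0 \<in> borel_measurable lebesgue"
    unfolding h0_def by (rule borel_measurable_if_I[OF h]) simp
  define b where "b = a - (1-a)/(1-m) * m"
  have "(\<lambda>s. h0 (0 + (a/m) * s)) \<in> borel_measurable lebesgue"
    using measurable_comp[OF lebesgue_affine_measurable_real[of "a/m" 0] h0] a m
    by (simp add: o_def)
  moreover have "(\<lambda>s. h0 (b + (1-a)/(1-m) * s)) \<in> borel_measurable lebesgue"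
    using measurable_comp[OF lebesgue_affine_measurable_real[of "(1-a)/(1-m)" b] h0] a m
    by (simp add: o_def)
  moreover have "{x \<in> space lebesgue. x \<le> m} \<in> sets lebesgue"
    by (simp add: atMost_def[symmetric] sets_completionI_sets)
  ultimately have "(\<lambda>s. if s \<le> m then h0 (0 + (a/m) * s) else h0 (b + (1-a)/(1-m) * s))
      \<in> borel_measurable L01"
    by (intro measurable_restrict_space1 measurable_If)
  moreover have "(if s \<le> m then h0 (0 + (a/m) * s) else h0 (b + (1-a)/(1-m) * s)) = h (kink a m s)"
    if "s \<in> space L01" for s
    using kink_in_unit[of s] kink_affine[of s] that by (auto simp: h0_def b_def)
  ultimately show ?thesis using measurable_cong by (smt (verit))
qed

lemma AE_comp_kink:
  assumes "AE t in L01. P t"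
  shows "AE s in L01. P (kink a m s)"
proof -
  obtain N where N: "negligible N" and NP: "\<And>x. x \<in> {0..1} \<Longrightarrow> x \<notin> N \<Longrightarrow> P x"
    using assms by (rule AE_lebesgue_on_negligibleE) auto
  define b where "b = a - (1-a)/(1-m) * m"
  let ?N1 = "{x. 0 + (a/m) * x \<in> N}" and ?N2 = "{x. b + (1-a)/(1-m) * x \<in> N}"
  have "negligible ?N1" by (rule negligible_affine_preimage[OF N]) (use a m in auto)
  moreover have "negligible ?N2" by (rule negligible_affine_preimage[OF N]) (use a m in auto)
  ultimately have "negligible (?N1 \<union> ?N2)" by auto
  moreover have "{x. \<not> (x \<in> {0..1} \<longrightarrow> P (kink a m x))} \<subseteq> ?N1 \<union> ?N2"
    using NP kink_in_unit kink_affine by (fastforce simp: b_def split: if_splits)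
  ultimately have "AE x in lebesgue. x \<in> {0..1} \<longrightarrow> P (kink a m x)"
    unfolding eventually_ae_filter_negligible by blast
  then show ?thesis by (subst AE_restrict_space_iff) auto
qed

lemma kink_slope_measurable: "kink_slope a m \<in> borel_measurable L01"
proof -
  have "{x \<in> space lebesgue. x \<le> m} \<in> sets lebesgue"
    by (simp add: atMost_def[symmetric] sets_completionI_sets)
  then have "(\<lambda>s. if s \<le> m then a/m else (1-a)/(1-m)) \<in> borel_measurable lebesgue"
    by (intro measurable_If) auto
  then show ?thesis unfolding kink_slope_def[abs_def] by (rule measurable_restrict_space1)
qed

end

definition reparam :: "real \<Rightarrow> real \<Rightarrow> (real \<Rightarrow> nat \<Rightarrow> real) \<Rightarrow> real \<Rightarrow> nat \<Rightarrow> real" where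
  "reparam a m f s = f (kink a m s)"

definition reparam_velocity :: "real \<Rightarrow> real \<Rightarrow> (real \<Rightarrow> nat \<Rightarrow> real) \<Rightarrow> real \<Rightarrow> nat \<Rightarrow> real" where
  "reparam_velocity a m v s k = kink_slope a m s * v (kink a m s) k"

lemma gcoef_reparam: "gcoef (reparam a m \<alpha>) (reparam a m f) s k = gcoef \<alpha> f (kink a m s) k"
  by (simp add: gcoef_def reparam_def)

lemma flux_reparam:
  "flux n (reparam a m \<alpha>) (reparam a m f) (reparam_velocity a m v) s j
    = kink_slope a m s * flux n \<alpha> f v (kink a m s) j"
  by (simp add: flux_def gcoef_reparam reparam_velocity_def)

lemma beta_reparam:
  "beta n (reparam a m f) (reparam a m \<alpha>) (reparam_velocity a m v) s
    = (kink_slope a m s)^2 * beta n f \<alpha> v (kink a m s)"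
  by (simp add: beta_def gcoef_reparam reparam_velocity_def power_mult_distrib sum_distrib_left algebra_simps)

context admissible_path
begin

lemma admissible_reparam:
  assumes "kink_params a m"
  shows "admissible_path n f0 f1 (reparam a m f) (reparam a m \<alpha>) (reparam_velocity a m v)"
proof -
  interpret kink_params a m by (rule assms)
  have "reparam a m f \<in> paths n f0 f1"
  proof -
    have "(\<lambda>s. reparam a m f s k) piecewise_differentiable_on {0..1}" if "k \<le> n" for k
      using piecewise_differentiable_compose[OF kink_piecewise_differentiable, of "\<lambda>t. f t k"]
        component_piecewise_differentiable[OF that]
        finite_vimageI[OF _ strict_mono_imp_inj_on[OF kink_strict_mono]]
      by (auto simp: kink_image reparam_def o_def)
    moreover have "reparam a m f 0 = f0" "reparam a m f 1 = f1"
      using path by (auto simp: reparam_def kink_0 kink_1 paths_def)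
    ultimately show ?thesis
      using pmf_on_path kink_in_unit by (auto simp: paths_def reparam_def)
  qed
  moreover have "reparam a m \<alpha> \<in> coeffs n"
    using coef kink_in_unit measurable_comp_kink[of "\<lambda>t. \<alpha> t _"]
    by (auto simp: coeffs_def reparam_def)
  moreover have "velocity_field n (reparam a m f) (reparam a m \<alpha>) (reparam_velocity a m v)"
    unfolding velocity_field_def
  proof (intro conjI allI impI)
    fix k assume "k < n"
    then show "(\<lambda>s. reparam_velocity a m v s k) \<in> borel_measurable L01"
      unfolding reparam_velocity_def using kink_slope_measurable measurable_comp_kink[OF velocity_measurable]
      by (intro borel_measurable_times) auto
  next
    have "AE s in L01. \<forall>k\<le>n. ((\<lambda>t. f t k) has_real_derivative (- nabla1 (flux n \<alpha> f v (kink a m s)) k))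
         (at (kink a m s) within {0..1})"
      using vel unfolding velocity_field_def by (intro AE_comp_kink) auto
    moreover have "AE s in L01. s \<notin> {m}" by (rule AE_L01_not_in_finite) simp
    ultimately show "AE s in L01. \<forall>k\<le>n. ((\<lambda>t. reparam a m f t k) has_real_derivative
        - nabla1 (flux n (reparam a m \<alpha>) (reparam a m f) (reparam_velocity a m v) s) k) (at s within {0..1})"
    proof eventually_elim
      case (elim s)
      show ?case
      proof (intro allI impI)
        fix k assume "k \<le> n"
        then have "((\<lambda>t. f t k) has_real_derivative (- nabla1 (flux n \<alpha> f v (kink a m s)) k))
            (at (kink a m s) within kink a m ` {0..1})"
          using elim(1) by (simp add: kink_image)
        moreover have "(kink a m has_real_derivative kink_slope a m s) (at s within {0..1})"
          using kink_has_derivative[of s] elim(2) by (auto intro: has_field_derivative_at_within)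
        ultimately have "(((\<lambda>t. f t k) \<circ> kink a m) has_real_derivative
            (- nabla1 (flux n \<alpha> f v (kink a m s)) k) * kink_slope a m s) (at s within {0..1})"
          by (rule DERIV_image_chain)
        moreover have "- nabla1 (flux n (reparam a m \<alpha>) (reparam a m f) (reparam_velocity a m v) s) k
            = (- nabla1 (flux n \<alpha> f v (kink a m s)) k) * kink_slope a m s"
          by (simp add: flux_reparam nabla1_def algebra_simps)
        ultimately show "((\<lambda>t. reparam a m f t k) has_real_derivative
            - nabla1 (flux n (reparam a m \<alpha>) (reparam a m f) (reparam_velocity a m v) s) k)
            (at s within {0..1})"
          by (simp add: reparam_def o_def)
      qed
    qed
  qed
  ultimately show ?thesis by unfold_locales
qed

end

section \<open>Geodesics have constant speed\<close>

definition energy_on :: "nat \<Rightarrow> (real \<Rightarrow> nat \<Rightarrow> real) \<Rightarrow> (real \<Rightarrow> nat \<Rightarrow> real)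
    \<Rightarrow> (real \<Rightarrow> nat \<Rightarrow> real) \<Rightarrow> real set \<Rightarrow> ennreal" where
  "energy_on n f \<alpha> v S = (\<integral>\<^sup>+t. ennreal (beta n f \<alpha> v t) * indicator S t \<partial>lebesgue)"

context admissible_path
begin

lemma energy_integrand_measurable:
  assumes "S \<subseteq> {0..1}" "S \<in> sets lebesgue"
  shows "(\<lambda>t. ennreal (beta n f \<alpha> v t) * indicator S t) \<in> borel_measurable lebesgue"
proof -
  have "(\<lambda>t. ennreal (beta n f \<alpha> v t) * indicator {0..1} t) \<in> borel_measurable lebesgue"
    using borel_measurable_restrict_space_iff_ennreal[of "{0..1}" lebesgue "\<lambda>t. ennreal (beta n f \<alpha> v t)"]
      measurable_compose[OF beta_measurable measurable_ennreal] by simp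
  from borel_measurable_times_ennreal[OF this borel_measurable_indicator[OF assms(2)]]
  have "(\<lambda>t. (ennreal (beta n f \<alpha> v t) * indicator {0..1} t) * indicator S t) \<in> borel_measurable lebesgue" .
  moreover have "(ennreal (beta n f \<alpha> v t) * indicator {0..1} t) * indicator S t
      = ennreal (beta n f \<alpha> v t) * indicator S t" for t
    using assms(1) by (auto split: split_indicator)
  ultimately show ?thesis by simp
qed

lemma path_length_sq_eq_energy_on: "path_length_sq n f \<alpha> v = energy_on n f \<alpha> v {0..1}"
  unfolding path_length_sq_def energy_on_def by (subst nn_integral_restrict_space) auto

lemma energy_on_split:
  assumes "0 \<le> x" "x \<le> 1"
  shows "energy_on n f \<alpha> v {0..1} = energy_on n f \<alpha> v {0..x} + energy_on n f \<alpha> v {x<..1}"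
proof -
  have "ennreal (beta n f \<alpha> v t) * indicator {0..1} t
      = ennreal (beta n f \<alpha> v t) * indicator {0..x} t + ennreal (beta n f \<alpha> v t) * indicator {x<..1} t" for t
    using assms by (auto split: split_indicator)
  then show ?thesis
    unfolding energy_on_def using assms
    by (simp only:) (intro nn_integral_add energy_integrand_measurable, auto)
qed

lemma energy_density_reparam:
  assumes "kink_params a m"
  defines "c1 \<equiv> a/m" and "c2 \<equiv> (1-a)/(1-m)" and "b \<equiv> a - (1-a)/(1-m) * m"
    and "H \<equiv> \<lambda>S t. ennreal (beta n f \<alpha> v t) * indicator S t"
  shows "ennreal (beta n (reparam a m f) (reparam a m \<alpha>) (reparam_velocity a m v) s) * indicator {0..1} s
    = ennreal (c1^2) * H {0..a} (c1 * s) + ennreal (c2^2) * H {a<..1} (b + c2 * s)"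
proof -
  interpret kink_params a m by (rule assms)
  have c: "0 < c1" "0 < c2" "c1 * m = a" "b + c2 * m = a" "b + c2 = 1" "a < c1"
    using kink_slopes_pos kink_constants unfolding c1_def c2_def b_def by simp_all
  have beta_R: "beta n (reparam a m f) (reparam a m \<alpha>) (reparam_velocity a m v) s
      = (if s \<le> m then c1^2 * beta n f \<alpha> v (c1 * s) else c2^2 * beta n f \<alpha> v (b + c2 * s))"
    using kink_affine[of s] by (simp add: beta_reparam kink_slope_def c1_def c2_def b_def)
  consider "s < 0" | "0 \<le> s" "s \<le> m" | "m < s" "s \<le> 1" | "1 < s" by linarith
  then show ?thesis
  proof cases
    case 1
    have "c1 * s < 0" "c2 * s < 0" using 1 c by (simp_all add: mult_pos_neg)
    moreover have "0 < c2 * m" using c m by simp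
    ultimately show ?thesis using 1 c by (simp add: H_def)
  next
    case 2
    have "c1 * s \<le> c1 * m" "c2 * s \<le> c2 * m" using 2 c by (intro mult_left_mono, simp_all)+
    then have "c1 * s \<le> a" "b + c2 * s \<le> a" using c by linarith+
    moreover have "0 \<le> c1 * s" using 2 c by simp
    ultimately show ?thesis using 2 m by (simp add: H_def beta_R ennreal_mult')
  next
    case 3
    have "c1 * m < c1 * s" "c2 * m < c2 * s" using 3 c by (intro mult_strict_left_mono, simp_all)+
    moreover have "c2 * s \<le> c2 * 1" using 3 c by (intro mult_left_mono) simp_all
    ultimately have "a < c1 * s" "a < b + c2 * s" "b + c2 * s \<le> 1" using c by linarith+
    then show ?thesis using 3 a m by (simp add: H_def beta_R ennreal_mult')
  next
    case 4
    have "c1 * 1 < c1 * s" "c2 * 1 < c2 * s" using 4 c by (intro mult_strict_left_mono, simp_all)+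
    then have "a < c1 * s" "1 < b + c2 * s" using c by linarith+
    then show ?thesis using 4 by (simp add: H_def)
  qed
qed

text \<open>On \<open>[0,m]\<close> the kink has slope \<open>a/m\<close> and covers \<open>[0,a]\<close>; on \<open>(m,1]\<close> it has slope
  \<open>(1-a)/(1-m)\<close> and covers \<open>(a,1]\<close>. The energy density picks up the square of the slope, and the
  substitution gives back one factor.\<close>

lemma path_length_sq_reparam:
  assumes "kink_params a m"
  shows "path_length_sq n (reparam a m f) (reparam a m \<alpha>) (reparam_velocity a m v)
    = ennreal (a/m) * energy_on n f \<alpha> v {0..a} + ennreal ((1-a)/(1-m)) * energy_on n f \<alpha> v {a<..1}"
proof -
  interpret kink_params a m by (rule assms)
  define c1 c2 b where "c1 = a/m" and "c2 = (1-a)/(1-m)" and "b = a - (1-a)/(1-m) * m"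
  define H where "H = (\<lambda>S t. ennreal (beta n f \<alpha> v t) * indicator S t)"
  have c: "0 < c1" "0 < c2" using kink_slopes_pos by (simp_all add: c1_def c2_def)
  have H_meas: "H {0..a} \<in> borel_measurable lebesgue" "H {a<..1} \<in> borel_measurable lebesgue"
    using a unfolding H_def by (auto intro!: energy_integrand_measurable)
  have "(\<lambda>s. H S (b' + c' * s)) \<in> borel_measurable lebesgue"
    if "H S \<in> borel_measurable lebesgue" "c' \<noteq> 0" for S b' c'
    using measurable_comp[OF lebesgue_affine_measurable_real[OF that(2)] that(1)] by (simp add: o_def)
  from this[OF H_meas(1), of c1 0] this[OF H_meas(2), of c2 b]
  have meas: "(\<lambda>s. H {0..a} (c1 * s)) \<in> borel_measurable lebesgue"
    "(\<lambda>s. H {a<..1} (b + c2 * s)) \<in> borel_measurable lebesgue"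
    using c by simp_all
  have pointwise:
    "ennreal (beta n (reparam a m f) (reparam a m \<alpha>) (reparam_velocity a m v) s) * indicator {0..1} s
      = ennreal (c1^2) * H {0..a} (c1 * s) + ennreal (c2^2) * H {a<..1} (b + c2 * s)" for s
    using energy_density_reparam[OF assms, of s] by (simp only: c1_def c2_def b_def H_def)
  have "path_length_sq n (reparam a m f) (reparam a m \<alpha>) (reparam_velocity a m v)
      = (\<integral>\<^sup>+s. ennreal (c1^2) * H {0..a} (c1 * s) + ennreal (c2^2) * H {a<..1} (b + c2 * s) \<partial>lebesgue)"
    unfolding path_length_sq_def pointwise[symmetric] by (subst nn_integral_restrict_space) auto
  also have "\<dots> = ennreal (c1^2) * (\<integral>\<^sup>+s. H {0..a} (0 + c1 * s) \<partial>lebesgue)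
      + ennreal (c2^2) * (\<integral>\<^sup>+s. H {a<..1} (b + c2 * s) \<partial>lebesgue)"
    using meas by (simp add: nn_integral_add nn_integral_cmult)
  also have "\<dots> = ennreal c1 * energy_on n f \<alpha> v {0..a} + ennreal c2 * energy_on n f \<alpha> v {a<..1}"
    unfolding nn_integral_affine_sq_scale[OF H_meas(1) c(1)] nn_integral_affine_sq_scale[OF H_meas(2) c(2)]
    by (simp add: energy_on_def H_def)
  finally show ?thesis by (simp add: c1_def c2_def)
qed

end

text \<open>\<open>G m = (a/m) A + ((1-a)/(1-m)) B\<close> takes the value \<open>A + B\<close> at \<open>m = a\<close>; if this is its
  minimum, \<open>G'(a) = -A/a + B/(1-a) = 0\<close>.\<close>

lemma proportional_if_minimal_at:
  fixes a A B :: real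
  assumes a: "0 < a" "a < 1"
    and minimal: "\<And>m. 0 < m \<Longrightarrow> m < 1 \<Longrightarrow> A + B \<le> (a/m) * A + ((1-a)/(1-m)) * B"
  shows "A = a * (A + B)"
proof -
  define G where "G m = (a/m) * A + ((1-a)/(1-m)) * B" for m
  have "(G has_real_derivative (- (a / (a*a)) * A + ((1-a) / ((1-a)*(1-a))) * B)) (at a)"
    unfolding G_def[abs_def] using a by (auto intro!: derivative_eq_intros simp: power2_eq_square)
  then have "- (a / (a*a)) * A + ((1-a) / ((1-a)*(1-a))) * B = 0"
  proof (rule DERIV_local_min[of _ _ _ "min a (1-a)"])
    show "0 < min a (1-a)" using a by simp
    show "\<forall>m. \<bar>a - m\<bar> < min a (1 - a) \<longrightarrow> G a \<le> G m"
    proof (intro allI impI)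
      fix m assume "\<bar>a - m\<bar> < min a (1 - a)"
      then have "0 < m" "m < 1" by (auto simp: abs_less_iff)
      then show "G a \<le> G m" using minimal[of m] a by (simp add: G_def)
    qed
  qed
  then have "A / a = B / (1-a)" using a by simp
  then have "A * (1-a) = a * B" using a by (simp add: field_simps)
  then show ?thesis by (simp add: algebra_simps)
qed

lemma geodesic_energy_on_linear:
  assumes geo: "is_geodesic n f0 f1 f \<alpha> v"
    and T: "path_length_sq n f \<alpha> v = ennreal T" "0 \<le> T"
    and x: "0 < x" "x < 1"
  shows "energy_on n f \<alpha> v {0..x} = ennreal (x * T)"
proof -
  interpret admissible_path n f0 f1 f \<alpha> v
    using geo by unfold_locales (auto simp: is_geodesic_def)
  have split: "ennreal T = energy_on n f \<alpha> v {0..x} + energy_on n f \<alpha> v {x<..1}"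
    using T energy_on_split[of x] x path_length_sq_eq_energy_on by simp
  then have "energy_on n f \<alpha> v {0..x} + energy_on n f \<alpha> v {x<..1} \<noteq> \<infinity>"
    by (simp add: split[symmetric])
  then have "energy_on n f \<alpha> v {0..x} \<noteq> \<infinity>" "energy_on n f \<alpha> v {x<..1} \<noteq> \<infinity>"
    by auto
  then obtain A B where AB: "energy_on n f \<alpha> v {0..x} = ennreal A" "energy_on n f \<alpha> v {x<..1} = ennreal B"
    "0 \<le> A" "0 \<le> B"
    by (cases "energy_on n f \<alpha> v {0..x}"; cases "energy_on n f \<alpha> v {x<..1}") auto
  have "T = A + B" using split AB T(2) by (simp add: ennreal_plus[symmetric] del: ennreal_plus)
  have "A + B \<le> (x/m) * A + ((1-x)/(1-m)) * B" if m: "0 < m" "m < 1" for m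
  proof -
    have kink: "kink_params x m" using x m by unfold_locales
    interpret reparam: admissible_path n f0 f1 "reparam x m f" "reparam x m \<alpha>" "reparam_velocity x m v"
      by (rule admissible_reparam[OF kink])
    have "ennreal (A + B) = Vn_sq n f0 f1"
      using geo T \<open>T = A + B\<close> by (simp add: is_geodesic_def)
    also have "\<dots> \<le> path_length_sq n (reparam x m f) (reparam x m \<alpha>) (reparam_velocity x m v)"
      unfolding Vn_sq_def by (rule Inf_lower) (use reparam.path reparam.coef reparam.vel in blast)
    also have "\<dots> = ennreal (x/m) * ennreal A + ennreal ((1-x)/(1-m)) * ennreal B"
      using path_length_sq_reparam[OF kink] AB by simp
    also have "\<dots> = ennreal ((x/m) * A) + ennreal (((1-x)/(1-m)) * B)"
    proof -
      have "0 \<le> x/m" "0 \<le> (1-x)/(1-m)" using x m by simp_all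
      then show ?thesis by (simp only: ennreal_mult')
    qed
    also have "\<dots> = ennreal ((x/m) * A + ((1-x)/(1-m)) * B)"
      using x m AB by (simp add: ennreal_plus)
    finally have "ennreal (A + B) \<le> ennreal ((x/m) * A + ((1-x)/(1-m)) * B)" .
    moreover have "0 \<le> (x/m) * A + ((1-x)/(1-m)) * B" using x m AB by simp
    ultimately show ?thesis by (simp add: ennreal_le_iff)
  qed
  then have "A = x * (A + B)" by (rule proportional_if_minimal_at[OF x])
  then show ?thesis using AB \<open>T = A + B\<close> by simp
qed

lemma geodesic_beta_AE_const:
  assumes "1 \<le> n" "pmf_on n f0" "pmf_on n f1" and geo: "is_geodesic n f0 f1 f \<alpha> v"
  shows "\<exists>c. AE t in L01. beta n f \<alpha> v t = c"
proof -
  interpret admissible_path n f0 f1 f \<alpha> v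
    using geo by unfold_locales (auto simp: is_geodesic_def)
  have "path_length_sq n f \<alpha> v \<noteq> \<infinity>"
    using geo Vn_sq_finite[OF assms(1-3)] by (simp add: is_geodesic_def)
  then obtain T where T: "path_length_sq n f \<alpha> v = ennreal T" "0 \<le> T"
    by (cases "path_length_sq n f \<alpha> v") auto
  define h where "h t = indicator {0..1} t * beta n f \<alpha> v t" for t
  have h_ennreal: "ennreal (h t) = ennreal (beta n f \<alpha> v t) * indicator {0..1} t" for t
    by (simp add: h_def split: split_indicator)
  have "AE t in lebesgue. t \<in> {0..1} \<longrightarrow> h t = T"
  proof (rule AE_eq_const_if_nn_integral_linear)
    have "(\<lambda>t. indicator {0..1} t *\<^sub>R beta n f \<alpha> v t) \<in> borel_measurable lebesgue"
      using beta_measurable by (subst (asm) borel_measurable_restrict_space_iff) auto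
    then show "h \<in> borel_measurable lebesgue" by (simp add: h_def[abs_def])
    show "0 \<le> h t" for t
      using beta_nonneg[of t] by (simp add: h_def split: split_indicator)
    show "t \<notin> {0..1} \<Longrightarrow> h t = 0" for t
      by (simp add: h_def)
    show "(\<integral>\<^sup>+t. ennreal (h t) \<partial>lebesgue) = ennreal T"
      using T path_length_sq_eq_energy_on by (simp add: h_ennreal energy_on_def)
    show "0 \<le> T" by (fact T(2))
    show "(\<integral>\<^sup>+t. ennreal (h t) * indicator {0..x} t \<partial>lebesgue) = ennreal (x * T)" if "0 < x" "x < 1" for x
    proof -
      have "(\<integral>\<^sup>+t. ennreal (h t) * indicator {0..x} t \<partial>lebesgue) = energy_on n f \<alpha> v {0..x}"
        unfolding energy_on_def
        by (intro nn_integral_cong) (use that in \<open>simp add: h_def split: split_indicator\<close>)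
      then show ?thesis using geodesic_energy_on_linear[OF geo T that] by simp
    qed
  qed
  then have "AE t in lebesgue. t \<in> {0..1} \<longrightarrow> beta n f \<alpha> v t = T"
    by eventually_elim (simp add: h_def)
  then have "AE t in L01. beta n f \<alpha> v t = T"
    by (subst AE_restrict_space_iff) auto
  then show ?thesis by blast
qed

theorem lemma3p4:
  fixes n :: nat and f0 f1 :: "nat \<Rightarrow> real" and f \<alpha> v :: "real \<Rightarrow> nat \<Rightarrow> real"
  assumes "n \<ge> 1" and "pmf_on n f0" and "pmf_on n f1"
    and "is_geodesic n f0 f1 f \<alpha> v"
  shows "(\<exists>c. AE t in lebesgue_on {0..1}. beta n f \<alpha> v t = c)
    \<and> Vn n f0 f1 \<ge> ennreal \<bar>mean n f0 - mean n f1\<bar>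
    \<and> (Vn n f0 f1 = ennreal \<bar>mean n f0 - mean n f1\<bar> \<longleftrightarrow>
         (\<exists>c. AE t in lebesgue_on {0..1}. \<forall>k<n. gcoef \<alpha> f t k \<noteq> 0 \<longrightarrow> v t k = c))"
proof (intro conjI)
  show "\<exists>c. AE t in lebesgue_on {0..1}. beta n f \<alpha> v t = c"
    by (rule geodesic_beta_AE_const[OF assms])
  show "Vn n f0 f1 \<ge> ennreal \<bar>mean n f0 - mean n f1\<bar>"
    by (rule Vn_ge_abs_mean_diff)
  show "Vn n f0 f1 = ennreal \<bar>mean n f0 - mean n f1\<bar> \<longleftrightarrow>
      (\<exists>c. AE t in lebesgue_on {0..1}. \<forall>k<n. gcoef \<alpha> f t k \<noteq> 0 \<longrightarrow> v t k = c)"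
    by (rule Vn_eq_abs_mean_diff_iff[OF assms(4)])
qed

end
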